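(* Let $M\in\mathrm{rep}\,G_{m,n}$ be interval-decomposable and $I\in\mathbb{I}_{m,n}$. Then for each $\ast\in\{ss,cc,tot\}$, $$\bar d^\ast_M(I)=\sum_{J\in U(I)} d_M(V_J).$$
   Context: Fix a field $K$. For integers $m,n\ge1$, $G_{m,n}$ is the equioriented commutative $m\times n$ grid: the quiver with vertex set $\{(i,j):1\le i\le m,\ 1\le j\le n\}$ and arrows $(i,j)\to(i,j+1)$ and $(i,j)\to(i+1,j)$, bound by all commutativity relations; $\mathrm{rep}\,G_{m,n}$ is its category of finite-dimensional representations over $K$ satisfying the relations. For an indecomposable $L$, $d_M(L)$ is the multiplicity of $L$ in a Krull–Schmidt decomposition of $M$. An interval of $G_{m,n}$ is a nonempty full subquiver $I$ which is connected (as an undirected graph) and convex (whenever $x,y\in I_0$ and there are paths $x\to z$, $z\to y$ in $G_{m,n}$, then $z\in I_0$); $\mathbb{I}_{m,n}$ is the set of intervals ordered by inclusion of vertex sets, and $U(I)=\{J\in\mathbb{I}_{m,n}:I\le J\}$. The interval representation $V_I$ has $K$ at vertices of $I$, $0$ elsewhere, identity maps on arrows inside $I$ and zero maps otherwise; $M$ is interval-decomposable if it is isomorphic to a direct sum of interval representations. Essential vertices: $I^{ss}_0$ is the set of sources and sinks of the quiver $I$; $I^{cc}_0=I_0\cap(\mathrm{pr}_1(I^{ss}_0)\times\mathrm{pr}_2(I^{ss}_0))$ with $\mathrm{pr}_1,\mathrm{pr}_2$ coordinate projections; $I^{tot}_0=I_0$. Let $KG_{m,n}$ be the $K$-linear category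 whose objects are the vertices and whose morphisms are $K$-linear combinations of paths modulo the commutativity relations; representations are $K$-linear functors $KG_{m,n}\to\mathrm{vect}_K$. For $\ast\in\{ss,cc,tot\}$, $\mathcal{C}^\ast_I$ is the full subcategory of $KG_{m,n}$ on $I^\ast_0$, and $M^\ast_I:=M|_{\mathcal{C}^\ast_I}$. The compressed multiplicity $\bar d^\ast_M(I)$ is the multiplicity of the indecomposable $(V_I)^\ast_I$ as a direct summand of $M^\ast_I$. *)

theory Defs
  imports "Jordan_Normal_Form.Matrix"
begin

type_synonym vtx = "nat \<times> nat"

definition grid :: "nat \<Rightarrow> nat \<Rightarrow> vtx set" where
  "grid m n = {1..m} \<times> {1..n}"

definition arrow :: "nat \<Rightarrow> nat \<Rightarrow> vtx \<Rightarrow> vtx \<Rightarrow> bool" where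
  "arrow m n x y \<longleftrightarrow> x \<in> grid m n \<and> y \<in> grid m n \<and>
     ((fst y = fst x \<and> snd y = snd x + 1) \<or> (fst y = fst x + 1 \<and> snd y = snd x))"

definition leq :: "nat \<Rightarrow> nat \<Rightarrow> vtx \<Rightarrow> vtx \<Rightarrow> bool" where
  "leq m n x y \<longleftrightarrow> x \<in> grid m n \<and> y \<in> grid m n \<and> (arrow m n)\<^sup>*\<^sup>* x y"

text \<open>Since all commutativity relations hold, the morphism space of K G_{m,n} from x to y
  is K (spanned by the unique path class) when there is a path x -> y, and 0 otherwise.
  A K-linear functor on the full subcategory on S is therefore given by a vector space
  K^(rdim x) at each x in S and a matrix rmap x y for each pair x, y in S with a path
  x -> y, subject to functoriality.\<close>

record 'a rep =
  rdim :: "vtx \<Rightarrow> nat"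
  rmap :: "vtx \<Rightarrow> vtx \<Rightarrow> 'a mat"

definition is_rep :: "nat \<Rightarrow> nat \<Rightarrow> vtx set \<Rightarrow> 'a::field rep \<Rightarrow> bool" where
  "is_rep m n S M \<longleftrightarrow> S \<subseteq> grid m n \<and>
     (\<forall>x\<in>S. \<forall>y\<in>S. leq m n x y \<longrightarrow> rmap M x y \<in> carrier_mat (rdim M y) (rdim M x)) \<and>
     (\<forall>x\<in>S. rmap M x x = 1\<^sub>m (rdim M x)) \<and>
     (\<forall>x\<in>S. \<forall>y\<in>S. \<forall>z\<in>S. leq m n x y \<longrightarrow> leq m n y z \<longrightarrow>
        rmap M y z * rmap M x y = rmap M x z)"

definition iso_rep :: "nat \<Rightarrow> nat \<Rightarrow> vtx set \<Rightarrow> 'a::field rep \<Rightarrow> 'a rep \<Rightarrow> bool" where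
  "iso_rep m n S M N \<longleftrightarrow> (\<exists>f :: vtx \<Rightarrow> 'a mat.
     (\<forall>x\<in>S. f x \<in> carrier_mat (rdim N x) (rdim M x) \<and> invertible_mat (f x)) \<and>
     (\<forall>x\<in>S. \<forall>y\<in>S. leq m n x y \<longrightarrow> f y * rmap M x y = rmap N x y * f x))"

definition dsum :: "'a::field rep list \<Rightarrow> 'a rep" where
  "dsum Ls = \<lparr> rdim = (\<lambda>x. sum_list (map (\<lambda>L. rdim L x) Ls)),
              rmap = (\<lambda>x y. diag_block_mat (map (\<lambda>L. rmap L x y) Ls)) \<rparr>"

definition nonzero_rep :: "vtx set \<Rightarrow> 'a rep \<Rightarrow> bool" where
  "nonzero_rep S M \<longleftrightarrow> (\<exists>x\<in>S. rdim M x > 0)"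

definition indecomposable :: "nat \<Rightarrow> nat \<Rightarrow> vtx set \<Rightarrow> 'a::field rep \<Rightarrow> bool" where
  "indecomposable m n S L \<longleftrightarrow> is_rep m n S L \<and> nonzero_rep S L \<and>
     \<not> (\<exists>A B. is_rep m n S A \<and> is_rep m n S B \<and> nonzero_rep S A \<and> nonzero_rep S B \<and>
            iso_rep m n S L (dsum [A, B]))"

definition KS_decomp :: "nat \<Rightarrow> nat \<Rightarrow> vtx set \<Rightarrow> 'a::field rep \<Rightarrow> 'a rep list \<Rightarrow> bool" where
  "KS_decomp m n S M Ls \<longleftrightarrow> (\<forall>L\<in>set Ls. indecomposable m n S L) \<and> iso_rep m n S M (dsum Ls)"

text \<open>Multiplicity of L in a Krull--Schmidt decomposition of M (well defined by Krull--Schmidt).\<close>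
definition mult :: "nat \<Rightarrow> nat \<Rightarrow> vtx set \<Rightarrow> 'a::field rep \<Rightarrow> 'a rep \<Rightarrow> nat" where
  "mult m n S M L = (SOME d. \<exists>Ls. KS_decomp m n S M Ls \<and>
        length (filter (\<lambda>N. iso_rep m n S N L) Ls) = d)"

definition connected_set :: "nat \<Rightarrow> nat \<Rightarrow> vtx set \<Rightarrow> bool" where
  "connected_set m n I \<longleftrightarrow> (\<forall>x\<in>I. \<forall>y\<in>I.
     (\<lambda>a b. a \<in> I \<and> b \<in> I \<and> (arrow m n a b \<or> arrow m n b a))\<^sup>*\<^sup>* x y)"

definition convex_set :: "nat \<Rightarrow> nat \<Rightarrow> vtx set \<Rightarrow> bool" where
  "convex_set m n I \<longleftrightarrow> (\<forall>x\<in>I. \<forall>y\<in>I. \<forall>z. leq m n x z \<and> leq m n z y \<longrightarrow> z \<in> I)"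

definition is_interval :: "nat \<Rightarrow> nat \<Rightarrow> vtx set \<Rightarrow> bool" where
  "is_interval m n I \<longleftrightarrow> I \<noteq> {} \<and> I \<subseteq> grid m n \<and> connected_set m n I \<and> convex_set m n I"

definition intv_rep :: "vtx set \<Rightarrow> 'a::field rep" where
  "intv_rep I = \<lparr> rdim = (\<lambda>x. if x \<in> I then 1 else 0),
     rmap = (\<lambda>x y. if x \<in> I \<and> y \<in> I then 1\<^sub>m 1
                   else 0\<^sub>m (if y \<in> I then 1 else 0) (if x \<in> I then 1 else 0)) \<rparr>"

definition interval_decomposable :: "nat \<Rightarrow> nat \<Rightarrow> 'a::field rep \<Rightarrow> bool" where
  "interval_decomposable m n M \<longleftrightarrow>
     (\<exists>Js. (\<forall>J\<in>set Js. is_interval m n J) \<and> iso_rep m n (grid m n) M (dsum (map intv_rep Js)))"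

definition sources_sinks :: "nat \<Rightarrow> nat \<Rightarrow> vtx set \<Rightarrow> vtx set" where
  "sources_sinks m n I = {x \<in> I. (\<not> (\<exists>a\<in>I. arrow m n a x)) \<or> (\<not> (\<exists>b\<in>I. arrow m n x b))}"

datatype compression = SS | CC | TOT

definition ess :: "nat \<Rightarrow> nat \<Rightarrow> compression \<Rightarrow> vtx set \<Rightarrow> vtx set" where
  "ess m n c I = (case c of
       SS \<Rightarrow> sources_sinks m n I
     | CC \<Rightarrow> I \<inter> (fst ` sources_sinks m n I \<times> snd ` sources_sinks m n I)
     | TOT \<Rightarrow> I)"

text \<open>M restricted to the full subcategory on ess c I is M viewed as a rep on that vertex set.\<close>
definition compressed_mult :: "nat \<Rightarrow> nat \<Rightarrow> compression \<Rightarrow> 'a::field rep \<Rightarrow> vtx set \<Rightarrow> nat" where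
  "compressed_mult m n c M I = mult m n (ess m n c I) M (intv_rep I)"

end

theory Submission
  imports Defs "Jordan_Normal_Form.Determinant"
begin

text \<open>For an interval I, the representation V_I restricted to the essential vertices S is
  one-dimensional on its support, and that support is connected through comparable vertices.
  Hence for morphisms F : V_I \<rightarrow> N and G : N \<rightarrow> V_I the scalar G_x F_x does not depend on the
  vertex x, and if it is nonzero a change of basis at each vertex splits V_I off N. So every
  indecomposable N is isomorphic to V_I or null (all these scalars vanish), and counting families of
  morphisms that are dual at one vertex shows that all Krull-Schmidt decompositions have the same
  number of summands isomorphic to V_I. For M the direct sum of the V_J, the restriction of V_J is
  isomorphic to V_I exactly when I \<subseteq> J, because an interval is the convex hull of its sources and
  sinks, and it is null otherwise; on the full grid the same count gives the multiplicity of V_J.\<close>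

section \<open>Block matrices\<close>

definition block_diag :: "'a::zero mat \<Rightarrow> 'a mat \<Rightarrow> 'a mat" where
  "block_diag A B = four_block_mat A (0\<^sub>m (dim_row A) (dim_col B)) (0\<^sub>m (dim_row B) (dim_col A)) B"

lemma block_diag_carrier [simp, intro]:
  "A \<in> carrier_mat a b \<Longrightarrow> B \<in> carrier_mat c d \<Longrightarrow> block_diag A B \<in> carrier_mat (a + c) (b + d)"
  by (simp add: block_diag_def)

lemma dim_block_diag [simp]:
  "dim_row (block_diag A B) = dim_row A + dim_row B"
  "dim_col (block_diag A B) = dim_col A + dim_col B"
  by (simp_all add: block_diag_def)

lemma block_diag_mult:
  fixes A :: "'a::semiring_0 mat"
  assumes "A \<in> carrier_mat a b" "B \<in> carrier_mat c d" "A' \<in> carrier_mat b e" "B' \<in> carrier_mat d f"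
  shows "block_diag A B * block_diag A' B' = block_diag (A * A') (B * B')"
  unfolding block_diag_def using assms by (subst mult_four_block_mat) auto

lemma block_diag_add:
  fixes A :: "'a::monoid_add mat"
  assumes "A \<in> carrier_mat a b" "B \<in> carrier_mat c d" "A' \<in> carrier_mat a b" "B' \<in> carrier_mat c d"
  shows "block_diag A B + block_diag A' B' = block_diag (A + A') (B + B')"
  unfolding block_diag_def using assms by (subst add_four_block_mat) auto

lemma block_diag_one [simp]: "block_diag (1\<^sub>m a) (1\<^sub>m b) = 1\<^sub>m (a + b)"
  by (simp add: block_diag_def)

lemma block_diag_zero [simp]: "block_diag (0\<^sub>m a b) (0\<^sub>m c d) = 0\<^sub>m (a + c) (b + d)"
  by (simp add: block_diag_def)

lemma block_diag_empty [simp]: "block_diag A (0\<^sub>m 0 0) = A"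
  by (intro eq_matI) (auto simp: block_diag_def)

lemma block_diag_empty_left [simp]: "block_diag (0\<^sub>m 0 0) B = B"
  by (intro eq_matI) (auto simp: block_diag_def)

lemma block_diag_inj:
  assumes eq: "block_diag A B = block_diag A' B'"
    and "A \<in> carrier_mat a b" "A' \<in> carrier_mat a b" "B \<in> carrier_mat c d" "B' \<in> carrier_mat c d"
  shows "A = A'" "B = B'"
proof -
  have e: "\<And>i j. block_diag A B $$ (i,j) = block_diag A' B' $$ (i,j)" using eq by simp
  show "A = A'"
  proof (rule eq_matI)
    fix i j assume "i < dim_row A'" "j < dim_col A'"
    thus "A $$ (i,j) = A' $$ (i,j)" using e[of i j] assms by (auto simp: block_diag_def)
  qed (use assms in auto)
  show "B = B'"
  proof (rule eq_matI)
    fix i j assume "i < dim_row B'" "j < dim_col B'"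
    thus "B $$ (i,j) = B' $$ (i,j)" using e[of "i + a" "j + b"] assms by (auto simp: block_diag_def)
  qed (use assms in auto)
qed

lemma mult_empty_mat:
  "A \<in> carrier_mat p 0 \<Longrightarrow> B \<in> carrier_mat 0 q \<Longrightarrow> A * B = (0\<^sub>m p q :: 'a::semiring_0 mat)"
  by (intro eq_matI) (auto simp: scalar_prod_def)

lemma empty_col_mat: "A \<in> carrier_mat k 0 \<Longrightarrow> A = 0\<^sub>m k 0"
  by (auto intro!: eq_matI)

lemma mat_mult_assoc4:
  assumes "P \<in> carrier_mat p q" "Q \<in> carrier_mat q r" "U \<in> carrier_mat r s" "V \<in> carrier_mat s t"
  shows "(P * Q) * (U * V) = P * (Q * U) * V"
proof -
  have "(P * Q) * (U * V) = P * (Q * (U * V))"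
    by (rule assoc_mult_mat[OF assms(1,2) mult_carrier_mat[OF assms(3,4)]])
  also have "Q * (U * V) = (Q * U) * V"
    by (rule assoc_mult_mat[OF assms(2,3,4), symmetric])
  also have "P * ((Q * U) * V) = (P * (Q * U)) * V"
    by (rule assoc_mult_mat[OF assms(1) mult_carrier_mat[OF assms(2,3)] assms(4), symmetric])
  finally show ?thesis .
qed

definition inl :: "nat \<Rightarrow> nat \<Rightarrow> 'a::semiring_1 mat" where "inl a b = block_diag (1\<^sub>m a) (0\<^sub>m b 0)"
definition inr :: "nat \<Rightarrow> nat \<Rightarrow> 'a::semiring_1 mat" where "inr a b = block_diag (0\<^sub>m a 0) (1\<^sub>m b)"
definition prl :: "nat \<Rightarrow> nat \<Rightarrow> 'a::semiring_1 mat" where "prl a b = block_diag (1\<^sub>m a) (0\<^sub>m 0 b)"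
definition prr :: "nat \<Rightarrow> nat \<Rightarrow> 'a::semiring_1 mat" where "prr a b = block_diag (0\<^sub>m 0 a) (1\<^sub>m b)"

lemma inl_carrier [simp]: "inl a b \<in> carrier_mat (a + b) a"
  and inr_carrier [simp]: "inr a b \<in> carrier_mat (a + b) b"
  and prl_carrier [simp]: "prl a b \<in> carrier_mat a (a + b)"
  and prr_carrier [simp]: "prr a b \<in> carrier_mat b (a + b)"
  using block_diag_carrier[of "1\<^sub>m a" a a "0\<^sub>m b 0" b 0]
    block_diag_carrier[of "0\<^sub>m a 0" a 0 "1\<^sub>m b" b b]
    block_diag_carrier[of "1\<^sub>m a" a a "0\<^sub>m 0 b" 0 b]
    block_diag_carrier[of "0\<^sub>m 0 a" 0 a "1\<^sub>m b" b b]
  by (simp_all add: inl_def inr_def prl_def prr_def)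

lemma prl_inl: "prl a b * inl a b = (1\<^sub>m a :: 'a::semiring_1 mat)"
  and prr_inr: "prr a b * inr a b = (1\<^sub>m b :: 'a::semiring_1 mat)"
  and prl_inr: "prl a b * inr a b = (0\<^sub>m a b :: 'a::semiring_1 mat)"
  and prr_inl: "prr a b * inl a b = (0\<^sub>m b a :: 'a::semiring_1 mat)"
  unfolding inl_def inr_def prl_def prr_def
  by (simp_all add: block_diag_mult[of _ a a _ 0 b _ a _ 0] block_diag_mult[of _ 0 a _ b b _ 0 _ b]
      block_diag_mult[of _ a a _ 0 b _ 0 _ b] block_diag_mult[of _ 0 a _ b b _ a _ 0])

lemma inl_prl_plus_inr_prr: "inl a b * prl a b + inr a b * prr a b = (1\<^sub>m (a + b) :: 'a::semiring_1 mat)"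
  unfolding inl_def inr_def prl_def prr_def
  by (simp add: block_diag_mult[of _ a a _ b 0 _ a _ b] block_diag_mult[of _ a 0 _ b b _ a _ b]
      block_diag_add[of _ a a _ b b])

lemma mult_through_blocks:
  fixes G F :: "'a::semiring_1 mat"
  assumes G: "G \<in> carrier_mat p (a + b)" and F: "F \<in> carrier_mat (a + b) q"
  shows "G * F = (G * inl a b) * (prl a b * F) + (G * inr a b) * (prr a b * F)"
proof -
  note c = mult_carrier_mat[OF prl_carrier F] mult_carrier_mat[OF prr_carrier F]
  have "F = (inl a b * prl a b + inr a b * prr a b) * F"
    using F by (simp add: inl_prl_plus_inr_prr)
  also have "\<dots> = inl a b * (prl a b * F) + inr a b * (prr a b * F)"
    using add_mult_distrib_mat[OF mult_carrier_mat[OF inl_carrier prl_carrier]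
        mult_carrier_mat[OF inr_carrier prr_carrier] F]
      assoc_mult_mat[OF inl_carrier prl_carrier F] assoc_mult_mat[OF inr_carrier prr_carrier F] by simp
  finally have "G * F = G * (inl a b * (prl a b * F)) + G * (inr a b * (prr a b * F))"
    using mult_add_distrib_mat[OF G mult_carrier_mat[OF inl_carrier c(1)] mult_carrier_mat[OF inr_carrier c(2)]]
    by simp
  thus ?thesis
    using assoc_mult_mat[OF G inl_carrier c(1)] assoc_mult_mat[OF G inr_carrier c(2)] by simp
qed

lemma dim_le_of_left_inverse:
  assumes B: "(B :: 'a::field mat) \<in> carrier_mat d c" and A: "A \<in> carrier_mat c d" and BA: "B * A = 1\<^sub>m d"
  shows "d \<le> c"
proof (rule ccontr)
  assume "\<not> d \<le> c"
  hence cd: "c < d" and cdd: "c + (d - c) = d" by simp_all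
  define B' where "B' = block_diag B (0\<^sub>m 0 (d - c))"
  define A' where "A' = block_diag A (0\<^sub>m (d - c) 0)"
  have B'c: "B' \<in> carrier_mat d d" and A'c: "A' \<in> carrier_mat d d"
    unfolding B'_def A'_def using A B cdd by (metis block_diag_carrier zero_carrier_mat add_0_right)+
  have "B' * A' = block_diag (1\<^sub>m d) (0\<^sub>m 0 0)"
    unfolding A'_def B'_def using A B BA by (subst block_diag_mult) auto
  hence "B' * A' = 1\<^sub>m d" by simp
  moreover have "det B' = 0"
  proof -
    let ?v = "unit_vec d (d - 1) :: 'a vec"
    have "B' *\<^sub>v ?v = 0\<^sub>v d"
      using B'c B cd by (intro eq_vecI) (auto simp: B'_def block_diag_def)
    moreover have "?v \<noteq> 0\<^sub>v d"
      using cd by (metis index_unit_vec(1) index_zero_vec(1) diff_less less_nat_zero_code not_gr_zero zero_neq_one)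
    ultimately show ?thesis using det_0_iff_vec_prod_zero_field[OF B'c] unit_vec_carrier by blast
  qed
  ultimately show False using det_mult[OF B'c A'c] by simp
qed

definition unit_col :: "nat \<Rightarrow> 'a::semiring_1 mat" where
  "unit_col r = mat r 1 (\<lambda>(i, j). if i = 0 then 1 else 0)"

definition unit_row :: "nat \<Rightarrow> 'a::semiring_1 mat" where
  "unit_row r = mat 1 r (\<lambda>(i, j). if j = 0 then 1 else 0)"

lemma unit_col_carrier [simp]: "unit_col r \<in> carrier_mat r 1"
  and unit_row_carrier [simp]: "unit_row r \<in> carrier_mat 1 r"
  and dim_unit_col [simp]: "dim_row (unit_col r) = r" "dim_col (unit_col r) = 1"
  and dim_unit_row [simp]: "dim_row (unit_row r) = 1" "dim_col (unit_row r) = r"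
  by (simp_all add: unit_col_def unit_row_def)

lemma col_unit_col: "0 < r \<Longrightarrow> col (unit_col r) 0 = unit_vec r 0"
  by (intro eq_vecI) (auto simp: unit_col_def unit_vec_def)

lemma row_unit_row: "0 < r \<Longrightarrow> row (unit_row r) 0 = unit_vec r 0"
  by (intro eq_vecI) (auto simp: unit_row_def unit_vec_def)

lemma mult_unit_col_index:
  "X \<in> carrier_mat p q \<Longrightarrow> 0 < q \<Longrightarrow> i < p \<Longrightarrow> (X * unit_col q) $$ (i, 0) = X $$ (i, 0)"
  by (simp add: col_unit_col)

lemma unit_row_mult_index:
  "X \<in> carrier_mat p q \<Longrightarrow> 0 < p \<Longrightarrow> j < q \<Longrightarrow> (unit_row p * X) $$ (0, j) = X $$ (0, j)"
  by (simp add: row_unit_row)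

text \<open>Change of basis sending F to e_0 when G F = 1: row 0 is G, and row i > 0 is e_i' - F_i' G,
  where i' = i except for the row i = k with G_k \<noteq> 0, which uses i' = 0.\<close>

definition pivot_mat :: "nat \<Rightarrow> nat \<Rightarrow> (nat \<Rightarrow> 'a) \<Rightarrow> (nat \<Rightarrow> 'a) \<Rightarrow> 'a::field mat" where
  "pivot_mat r k w v = mat r r (\<lambda>(i, j). if i = 0 then w j
     else (if (if i = k then 0 else i) = j then 1 else 0) - w j * v (if i = k then 0 else i))"

lemma pivot_mat_carrier [simp]: "pivot_mat r k w v \<in> carrier_mat r r"
  and dim_pivot_mat [simp]: "dim_row (pivot_mat r k w v) = r" "dim_col (pivot_mat r k w v) = r"
  by (simp_all add: pivot_mat_def)

lemma pivot_mat_mult_col: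
  assumes F: "F \<in> carrier_mat r 1" and wv: "(\<Sum>j<r. w j * F $$ (j, 0)) = 1" and k: "k < r"
  shows "pivot_mat r k w (\<lambda>j. F $$ (j, 0)) * F = unit_col r"
proof (rule eq_matI)
  fix i j assume "i < dim_row (unit_col r :: 'a mat)" "j < dim_col (unit_col r :: 'a mat)"
  hence i: "i < r" and j: "j = 0" by (auto simp: unit_col_def)
  let ?v = "\<lambda>j. F $$ (j, 0)" and ?i' = "if i = k then 0 else i"
  have "(pivot_mat r k w ?v * F) $$ (i, 0) = (\<Sum>l<r. pivot_mat r k w ?v $$ (i, l) * ?v l)"
    using F i by (simp add: scalar_prod_def atLeast0LessThan pivot_mat_def)
  also have "\<dots> = of_bool (i = 0)"
  proof (cases "i = 0")
    case False
    have "(\<Sum>l<r. pivot_mat r k w ?v $$ (i, l) * ?v l)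
        = (\<Sum>l<r. (if ?i' = l then ?v l else 0) - ?v ?i' * (w l * ?v l))"
      using False i by (intro sum.cong) (auto simp: pivot_mat_def algebra_simps)
    also have "\<dots> = (\<Sum>l<r. if ?i' = l then ?v l else 0) - ?v ?i' * (\<Sum>l<r. w l * ?v l)"
      by (simp add: sum_subtractf sum_distrib_left)
    also have "\<dots> = 0" using wv i k by simp
    finally show ?thesis using False by simp
  qed (use wv i in \<open>simp add: pivot_mat_def\<close>)
  finally show "(pivot_mat r k w ?v * F) $$ (i, j) = unit_col r $$ (i, j)"
    using i j by (simp add: unit_col_def)
qed (use F in auto)

lemma unit_row_mult_pivot_mat:
  assumes "0 < r" shows "unit_row r * pivot_mat r k w v = mat 1 r (\<lambda>(_, j). w j)"
proof (rule eq_matI)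
  fix i j assume "i < dim_row (mat 1 r (\<lambda>(_, j). w j))" "j < dim_col (mat 1 r (\<lambda>(_, j). w j))"
  thus "(unit_row r * pivot_mat r k w v) $$ (i, j) = mat 1 r (\<lambda>(_, j). w j) $$ (i, j)"
    using unit_row_mult_index[OF pivot_mat_carrier assms] by (simp add: pivot_mat_def)
qed auto

lemma det_pivot_mat_nonzero:
  assumes k: "k < r" and wk: "w k \<noteq> 0"
  shows "det (pivot_mat r k w v) \<noteq> 0"
proof
  let ?P = "pivot_mat r k w v"
  assume "det ?P = 0"
  then obtain u where u: "u \<in> carrier_vec r" "u \<noteq> 0\<^sub>v r" "?P *\<^sub>v u = 0\<^sub>v r"
    using det_0_iff_vec_prod_zero_field[OF pivot_mat_carrier] by blast
  define s where "s = (\<Sum>l<r. w l * u $ l)"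
  have Pu: "(\<Sum>l<r. ?P $$ (i, l) * u $ l) = 0" if "i < r" for i
  proof -
    have "(?P *\<^sub>v u) $ i = (\<Sum>l<r. ?P $$ (i, l) * u $ l)"
      using u(1) that by (simp add: scalar_prod_def atLeast0LessThan)
    thus ?thesis using u(3) that by simp
  qed
  have s0: "s = 0" using Pu[of 0] k by (simp add: s_def pivot_mat_def)
  have off_k: "u $ j = 0" if j: "j < r" "j \<noteq> k" for j
  proof -
    \<comment> \<open>row i of the kernel equation reads u_i' = v_i' s = 0, and i' ranges over all j \<noteq> k\<close>
    define i where "i = (if j = 0 then k else j)"
    have i: "i < r" "i \<noteq> 0" "(if i = k then 0 else i) = j" using j k by (auto simp: i_def)
    have "(\<Sum>l<r. ?P $$ (i, l) * u $ l) = (\<Sum>l<r. (if j = l then u $ l else 0) - v j * (w l * u $ l))"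
      using i by (intro sum.cong) (auto simp: pivot_mat_def algebra_simps)
    also have "\<dots> = u $ j - v j * s"
      using j by (simp add: sum_subtractf sum_distrib_left s_def)
    finally show ?thesis using Pu[OF i(1)] s0 by simp
  qed
  have "s = w k * u $ k"
    unfolding s_def using off_k k by (subst sum.remove[of _ k]) (auto intro!: sum.neutral)
  hence "u $ k = 0" using s0 wk by simp
  hence "u = 0\<^sub>v r" using off_k u(1) by (intro eq_vecI) auto
  thus False using u(2) by simp
qed

lemma dual_pair_normal_form:
  fixes F G :: "'a::field mat"
  assumes F: "F \<in> carrier_mat r 1" and G: "G \<in> carrier_mat 1 r" and GF: "G * F = 1\<^sub>m 1"
  obtains P P' where "P \<in> carrier_mat r r" "P' \<in> carrier_mat r r" "P * P' = 1\<^sub>m r" "P' * P = 1\<^sub>m r"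
    "P * F = unit_col r" "G * P' = unit_row r"
proof -
  define w where "w = (\<lambda>j. G $$ (0, j))"
  have wv: "(\<Sum>j<r. w j * F $$ (j, 0)) = 1"
    using arg_cong[OF GF, of "\<lambda>A. A $$ (0, 0)"] F G
    by (simp add: scalar_prod_def w_def atLeast0LessThan)
  have "\<exists>k<r. w k \<noteq> 0"
  proof (rule ccontr)
    assume "\<not> (\<exists>k<r. w k \<noteq> 0)"
    hence "(\<Sum>j<r. w j * F $$ (j, 0)) = 0" by simp
    thus False using wv by simp
  qed
  then obtain k where k: "k < r" "w k \<noteq> 0" by blast
  define P where "P = pivot_mat r k w (\<lambda>j. F $$ (j, 0))"
  have "det P \<noteq> 0" unfolding P_def by (rule det_pivot_mat_nonzero[of k r w, OF k])
  then obtain P' where P': "P' \<in> carrier_mat r r" "P' * P = 1\<^sub>m r" "P * P' = 1\<^sub>m r"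
    using det_non_zero_imp_unit[OF pivot_mat_carrier, of r k w "\<lambda>j. F $$ (j, 0)" "()"]
    unfolding P_def Units_def by (auto simp: ring_mat_simps)
  have PF: "P * F = unit_col r" unfolding P_def by (rule pivot_mat_mult_col[OF F wv k(1)])
  have "unit_row r * P = G"
    using unit_row_mult_pivot_mat[of r k w] k G unfolding P_def w_def by (auto intro!: eq_matI)
  hence "G * P' = unit_row r * (P * P')"
    using assoc_mult_mat[OF unit_row_carrier pivot_mat_carrier[of r k w "\<lambda>j. F $$ (j, 0)"] P'(1)]
    unfolding P_def by simp
  hence "G * P' = unit_row r" using P'(3) by simp
  thus thesis using that[OF _ P'(1) P'(3) P'(2) PF] P_def by simp
qed

section \<open>Representations of the grid and their morphisms\<close>

lemma leq_refl: "x \<in> grid m n \<Longrightarrow> leq m n x x"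
  by (simp add: leq_def)

lemma leq_trans: "leq m n x y \<Longrightarrow> leq m n y z \<Longrightarrow> leq m n x z"
  unfolding leq_def by auto

lemma arrow_imp_leq: "arrow m n x y \<Longrightarrow> leq m n x y"
  unfolding leq_def by (auto simp: arrow_def)

lemma is_rep_rmap_carrier:
  "is_rep m n S X \<Longrightarrow> x \<in> S \<Longrightarrow> y \<in> S \<Longrightarrow> leq m n x y \<Longrightarrow> rmap X x y \<in> carrier_mat (rdim X y) (rdim X x)"
  unfolding is_rep_def by auto

lemma is_rep_rmap_id: "is_rep m n S X \<Longrightarrow> x \<in> S \<Longrightarrow> rmap X x x = 1\<^sub>m (rdim X x)"
  unfolding is_rep_def by auto

lemma is_rep_rmap_comp:
  "is_rep m n S X \<Longrightarrow> x \<in> S \<Longrightarrow> y \<in> S \<Longrightarrow> z \<in> S \<Longrightarrow> leq m n x y \<Longrightarrow> leq m n y z \<Longrightarrow>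
   rmap X y z * rmap X x y = rmap X x z"
  unfolding is_rep_def by auto

lemma is_rep_subset: "is_rep m n S X \<Longrightarrow> S' \<subseteq> S \<Longrightarrow> is_rep m n S' X"
  unfolding is_rep_def by blast

lemma iso_rep_subset: "iso_rep m n S X Y \<Longrightarrow> S' \<subseteq> S \<Longrightarrow> iso_rep m n S' X Y"
  unfolding iso_rep_def by blast

lemma iso_rep_rdim:
  assumes "iso_rep m n S M N" "x \<in> S" shows "rdim M x = rdim N x"
  using assms unfolding iso_rep_def invertible_mat_def square_mat.simps by auto

definition rhom :: "nat \<Rightarrow> nat \<Rightarrow> vtx set \<Rightarrow> 'a::field rep \<Rightarrow> 'a rep \<Rightarrow> (vtx \<Rightarrow> 'a mat) \<Rightarrow> bool" where
  "rhom m n S X Y f \<longleftrightarrow> (\<forall>x\<in>S. f x \<in> carrier_mat (rdim Y x) (rdim X x)) \<and>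
     (\<forall>x\<in>S. \<forall>y\<in>S. leq m n x y \<longrightarrow> f y * rmap X x y = rmap Y x y * f x)"

lemma rhom_carrier: "rhom m n S X Y f \<Longrightarrow> x \<in> S \<Longrightarrow> f x \<in> carrier_mat (rdim Y x) (rdim X x)"
  and rhom_commute: "rhom m n S X Y f \<Longrightarrow> x \<in> S \<Longrightarrow> y \<in> S \<Longrightarrow> leq m n x y \<Longrightarrow> f y * rmap X x y = rmap Y x y * f x"
  unfolding rhom_def by auto

lemma rhom_comp:
  assumes X: "is_rep m n S X" and Y: "is_rep m n S Y" and Z: "is_rep m n S Z"
    and f: "rhom m n S X Y f" and g: "rhom m n S Y Z g"
  shows "rhom m n S X Z (\<lambda>x. g x * f x)"
  unfolding rhom_def
proof (intro conjI ballI impI)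
  fix x assume "x \<in> S"
  thus "g x * f x \<in> carrier_mat (rdim Z x) (rdim X x)" by (metis mult_carrier_mat rhom_carrier f g)
next
  fix x y assume xy: "x \<in> S" "y \<in> S" "leq m n x y"
  note c = rhom_carrier[OF f xy(1)] rhom_carrier[OF f xy(2)] rhom_carrier[OF g xy(1)] rhom_carrier[OF g xy(2)]
    is_rep_rmap_carrier[OF X xy] is_rep_rmap_carrier[OF Y xy] is_rep_rmap_carrier[OF Z xy]
  have "g y * f y * rmap X x y = g y * (rmap Y x y * f x)"
    using assoc_mult_mat[OF c(4) c(2) c(5)] rhom_commute[OF f xy] by simp
  also have "\<dots> = (rmap Z x y * g x) * f x"
    using assoc_mult_mat[OF c(4) c(6) c(1)] rhom_commute[OF g xy] by simp
  also have "\<dots> = rmap Z x y * (g x * f x)" by (rule assoc_mult_mat[OF c(7) c(3) c(1)])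
  finally show "g y * f y * rmap X x y = rmap Z x y * (g x * f x)" .
qed

lemma rhom_smult:
  assumes X: "is_rep m n S X" and Y: "is_rep m n S Y" and f: "rhom m n S X Y f"
  shows "rhom m n S X Y (\<lambda>x. c \<cdot>\<^sub>m f x)"
  unfolding rhom_def
proof (intro conjI ballI impI)
  fix x assume "x \<in> S"
  thus "c \<cdot>\<^sub>m f x \<in> carrier_mat (rdim Y x) (rdim X x)" using rhom_carrier[OF f] by simp
next
  fix x y assume xy: "x \<in> S" "y \<in> S" "leq m n x y"
  note cc = rhom_carrier[OF f xy(1)] rhom_carrier[OF f xy(2)] is_rep_rmap_carrier[OF X xy] is_rep_rmap_carrier[OF Y xy]
  have "c \<cdot>\<^sub>m f y * rmap X x y = c \<cdot>\<^sub>m (rmap Y x y * f x)"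
    using cc rhom_commute[OF f xy] by (simp add: mult_smult_assoc_mat)
  also have "\<dots> = rmap Y x y * (c \<cdot>\<^sub>m f x)" using cc by (simp add: mult_smult_distrib)
  finally show "c \<cdot>\<^sub>m f y * rmap X x y = rmap Y x y * (c \<cdot>\<^sub>m f x)" .
qed

lemma invertible_matE:
  assumes "f \<in> carrier_mat k l" "invertible_mat (f :: 'a::field mat)"
  obtains g where "g \<in> carrier_mat l k" "g * f = 1\<^sub>m l" "f * g = 1\<^sub>m k"
proof -
  from assms(2) obtain g where sq: "square_mat f" and "f * g = 1\<^sub>m (dim_row f)" "g * f = 1\<^sub>m (dim_row g)"
    unfolding invertible_mat_def inverts_mat_def by auto
  moreover from this have "dim_row g = l" "dim_col g = k"
    using assms(1) by (metis carrier_matD index_mult_mat(2,3) index_one_mat(2,3))+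
  ultimately show ?thesis using assms(1) that by auto
qed

lemma iso_rep_rhomsE:
  assumes M: "is_rep m n S M" and N: "is_rep m n S N" and iso: "iso_rep m n S M N"
  obtains f g where "rhom m n S M N f" "rhom m n S N M g"
    "\<And>x. x \<in> S \<Longrightarrow> g x * f x = 1\<^sub>m (rdim M x)" "\<And>x. x \<in> S \<Longrightarrow> f x * g x = 1\<^sub>m (rdim N x)"
proof -
  from iso obtain f where f1: "\<forall>x\<in>S. f x \<in> carrier_mat (rdim N x) (rdim M x) \<and> invertible_mat (f x)"
    and f2: "\<forall>x\<in>S. \<forall>y\<in>S. leq m n x y \<longrightarrow> f y * rmap M x y = rmap N x y * f x"
    unfolding iso_rep_def by auto
  have "\<forall>x\<in>S. \<exists>g. g \<in> carrier_mat (rdim M x) (rdim N x) \<and> g * f x = 1\<^sub>m (rdim M x) \<and> f x * g = 1\<^sub>m (rdim N x)"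
    using f1 by (metis invertible_matE)
  then obtain g where g: "\<And>x. x \<in> S \<Longrightarrow> g x \<in> carrier_mat (rdim M x) (rdim N x)"
    "\<And>x. x \<in> S \<Longrightarrow> g x * f x = 1\<^sub>m (rdim M x)" "\<And>x. x \<in> S \<Longrightarrow> f x * g x = 1\<^sub>m (rdim N x)"
    by metis
  have hf: "rhom m n S M N f" using f1 f2 unfolding rhom_def by auto
  have hg: "rhom m n S N M g" unfolding rhom_def
  proof (intro conjI ballI impI)
    fix x y assume xy: "x \<in> S" "y \<in> S" "leq m n x y"
    have fx: "f x \<in> carrier_mat (rdim N x) (rdim M x)" and fy: "f y \<in> carrier_mat (rdim N y) (rdim M y)"
      using f1 xy by auto
    note RM = is_rep_rmap_carrier[OF M xy] and RN = is_rep_rmap_carrier[OF N xy]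
    have GR: "g y * rmap N x y \<in> carrier_mat (rdim M y) (rdim N x)" using g(1)[OF xy(2)] RN by simp
    have "g y * rmap N x y = ((g y * rmap N x y) * f x) * g x"
      using g(3)[OF xy(1)] right_mult_one_mat[OF GR] assoc_mult_mat[OF GR fx g(1)[OF xy(1)]] by simp
    also have "(g y * rmap N x y) * f x = (g y * f y) * rmap M x y"
      using assoc_mult_mat[OF g(1)[OF xy(2)] RN fx] assoc_mult_mat[OF g(1)[OF xy(2)] fy RM] f2 xy by simp
    also have "\<dots> = rmap M x y" using g(2)[OF xy(2)] RM by simp
    finally show "g y * rmap N x y = rmap M x y * g x" .
  qed (use g in blast)
  show ?thesis by (rule that[OF hf hg]) (use g in auto)
qed

lemma iso_rep_of_rhoms:
  assumes f: "rhom m n S M N f" and g: "rhom m n S N M g"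
    and gf: "\<And>x. x \<in> S \<Longrightarrow> g x * f x = 1\<^sub>m (rdim M x)" and fg: "\<And>x. x \<in> S \<Longrightarrow> f x * g x = 1\<^sub>m (rdim N x)"
    and dims: "\<And>x. x \<in> S \<Longrightarrow> rdim M x = rdim N x"
  shows "iso_rep m n S M N"
  unfolding iso_rep_def
proof (intro exI[of _ f] conjI ballI impI)
  fix x assume x: "x \<in> S"
  show "f x \<in> carrier_mat (rdim N x) (rdim M x)" using rhom_carrier[OF f x] .
  show "invertible_mat (f x)" unfolding invertible_mat_def inverts_mat_def
    using rhom_carrier[OF f x] rhom_carrier[OF g x] gf[OF x] fg[OF x] dims[OF x]
    by (intro conjI exI[of _ "g x"]) (auto simp: square_mat.simps)
qed (use rhom_commute[OF f] in auto)

lemma iso_rep_eqI: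
  assumes M: "is_rep m n S M" and d: "\<And>x. x \<in> S \<Longrightarrow> rdim M x = rdim N x"
    and r: "\<And>x y. x \<in> S \<Longrightarrow> y \<in> S \<Longrightarrow> leq m n x y \<Longrightarrow> rmap M x y = rmap N x y"
  shows "iso_rep m n S M N"
  unfolding iso_rep_def
proof (intro exI[of _ "\<lambda>x. 1\<^sub>m (rdim M x)"] conjI ballI impI)
  fix x assume "x \<in> S"
  thus "1\<^sub>m (rdim M x) \<in> carrier_mat (rdim N x) (rdim M x)" using d by simp
  show "invertible_mat (1\<^sub>m (rdim M x) :: 'a mat)"
    unfolding invertible_mat_def inverts_mat_def by (auto simp: square_mat.simps intro!: exI[of _ "1\<^sub>m (rdim M x)"])
next
  fix x y assume xy: "x \<in> S" "y \<in> S" "leq m n x y"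
  show "1\<^sub>m (rdim M y) * rmap M x y = rmap N x y * 1\<^sub>m (rdim M x)"
    using is_rep_rmap_carrier[OF M xy] r[OF xy] by simp
qed

lemma iso_rep_refl: "is_rep m n S M \<Longrightarrow> iso_rep m n S M M"
  by (rule iso_rep_eqI) auto

lemma iso_rep_sym:
  assumes M: "is_rep m n S M" and N: "is_rep m n S N" and iso: "iso_rep m n S M N"
  shows "iso_rep m n S N M"
proof -
  obtain f g where fg: "rhom m n S M N f" "rhom m n S N M g"
    "\<And>x. x \<in> S \<Longrightarrow> g x * f x = 1\<^sub>m (rdim M x)" "\<And>x. x \<in> S \<Longrightarrow> f x * g x = 1\<^sub>m (rdim N x)"
    using iso_rep_rhomsE[OF M N iso] by blast
  show ?thesis by (rule iso_rep_of_rhoms[OF fg(2,1)]) (use fg(3,4) iso_rep_rdim[OF iso] in auto)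
qed

lemma iso_rep_trans:
  assumes M: "is_rep m n S M" and N: "is_rep m n S N" and L: "is_rep m n S L"
    and MN: "iso_rep m n S M N" and NL: "iso_rep m n S N L"
  shows "iso_rep m n S M L"
proof -
  obtain f g where fg: "rhom m n S M N f" "rhom m n S N M g"
    "\<And>x. x \<in> S \<Longrightarrow> g x * f x = 1\<^sub>m (rdim M x)" "\<And>x. x \<in> S \<Longrightarrow> f x * g x = 1\<^sub>m (rdim N x)"
    using iso_rep_rhomsE[OF M N MN] by blast
  obtain f' g' where fg': "rhom m n S N L f'" "rhom m n S L N g'"
    "\<And>x. x \<in> S \<Longrightarrow> g' x * f' x = 1\<^sub>m (rdim N x)" "\<And>x. x \<in> S \<Longrightarrow> f' x * g' x = 1\<^sub>m (rdim L x)"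
    using iso_rep_rhomsE[OF N L NL] by blast
  show ?thesis
  proof (rule iso_rep_of_rhoms[OF rhom_comp[OF M N L fg(1) fg'(1)] rhom_comp[OF L N M fg'(2) fg(2)]])
    fix x assume x: "x \<in> S"
    note c = rhom_carrier[OF fg(1) x] rhom_carrier[OF fg(2) x] rhom_carrier[OF fg'(1) x] rhom_carrier[OF fg'(2) x]
    have "g x * g' x * (f' x * f x) = g x * 1\<^sub>m (rdim N x) * f x"
      using mat_mult_assoc4[OF c(2) c(4) c(3) c(1)] fg'(3)[OF x] by simp
    also have "\<dots> = 1\<^sub>m (rdim M x)" using fg(3)[OF x] c(2) by simp
    finally show "g x * g' x * (f' x * f x) = 1\<^sub>m (rdim M x)" .
    have "f' x * f x * (g x * g' x) = f' x * 1\<^sub>m (rdim N x) * g' x"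
      using mat_mult_assoc4[OF c(3) c(1) c(2) c(4)] fg(4)[OF x] by simp
    also have "\<dots> = 1\<^sub>m (rdim L x)" using fg'(4)[OF x] c(3) by simp
    finally show "f' x * f x * (g x * g' x) = 1\<^sub>m (rdim L x)" .
    show "rdim M x = rdim L x" using iso_rep_rdim[OF MN x] iso_rep_rdim[OF NL x] by simp
  qed
qed

section \<open>Direct sums\<close>

definition bsum :: "'a::field rep \<Rightarrow> 'a rep \<Rightarrow> 'a rep" where
  "bsum A B = \<lparr>rdim = (\<lambda>x. rdim A x + rdim B x), rmap = (\<lambda>x y. block_diag (rmap A x y) (rmap B x y))\<rparr>"

lemma rdim_bsum [simp]: "rdim (bsum A B) x = rdim A x + rdim B x"
  and rmap_bsum [simp]: "rmap (bsum A B) x y = block_diag (rmap A x y) (rmap B x y)"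
  by (simp_all add: bsum_def)

lemma rdim_dsum_Nil [simp]: "rdim (dsum []) x = 0"
  and rmap_dsum_Nil [simp]: "rmap (dsum []) x y = 0\<^sub>m 0 0"
  by (simp_all add: dsum_def)

lemma dsum_Cons: "dsum (N # Ls) = bsum N (dsum Ls)"
  by (simp add: dsum_def bsum_def block_diag_def Let_def)

lemma dsum_append: "dsum (Ls @ Ls') = bsum (dsum Ls) (dsum Ls')"
  by (simp add: dsum_def bsum_def block_diag_def diag_block_mat_append Let_def)

lemma bsum_dsum_Nil: "bsum A (dsum []) = A" "bsum (dsum []) A = A"
  by (cases A; simp add: bsum_def)+

lemma dsum_single: "dsum [A] = A"
  and dsum_pair: "dsum [A, B] = bsum A B"
  by (simp_all add: dsum_Cons bsum_dsum_Nil)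

lemma is_rep_bsum:
  assumes A: "is_rep m n S A" and B: "is_rep m n S B"
  shows "is_rep m n S (bsum A B)"
  unfolding is_rep_def
proof (intro conjI ballI impI)
  show "S \<subseteq> grid m n" using A unfolding is_rep_def by auto
next
  fix x y assume "x \<in> S" "y \<in> S" "leq m n x y"
  thus "rmap (bsum A B) x y \<in> carrier_mat (rdim (bsum A B) y) (rdim (bsum A B) x)"
    using is_rep_rmap_carrier[OF A] is_rep_rmap_carrier[OF B] by simp
next
  fix x assume "x \<in> S"
  thus "rmap (bsum A B) x x = 1\<^sub>m (rdim (bsum A B) x)"
    using is_rep_rmap_id[OF A] is_rep_rmap_id[OF B] by simp
next
  fix x y z assume xyz: "x \<in> S" "y \<in> S" "z \<in> S" "leq m n x y" "leq m n y z"
  show "rmap (bsum A B) y z * rmap (bsum A B) x y = rmap (bsum A B) x z"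
    using block_diag_mult[OF is_rep_rmap_carrier[OF A xyz(2,3,5)] is_rep_rmap_carrier[OF B xyz(2,3,5)]
        is_rep_rmap_carrier[OF A xyz(1,2,4)] is_rep_rmap_carrier[OF B xyz(1,2,4)]]
      is_rep_rmap_comp[OF A xyz] is_rep_rmap_comp[OF B xyz] by simp
qed

lemma is_rep_dsum:
  assumes "S \<subseteq> grid m n" "\<forall>L\<in>set Ls. is_rep m n S L"
  shows "is_rep m n S (dsum Ls)"
  using assms(2)
proof (induction Ls)
  case Nil
  show ?case using assms(1) unfolding is_rep_def by auto
next
  case (Cons L Ls)
  thus ?case unfolding dsum_Cons by (intro is_rep_bsum) auto
qed

lemma rhom_id: "is_rep m n S A \<Longrightarrow> rhom m n S A A (\<lambda>x. 1\<^sub>m (rdim A x))"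
  unfolding rhom_def by (auto dest: is_rep_rmap_carrier)

lemma rhom_zero:
  assumes A: "is_rep m n S A" and B: "is_rep m n S B"
  shows "rhom m n S A B (\<lambda>x. 0\<^sub>m (rdim B x) (rdim A x))"
  unfolding rhom_def
proof (intro conjI ballI impI)
  fix x y assume xy: "x \<in> S" "y \<in> S" "leq m n x y"
  show "0\<^sub>m (rdim B y) (rdim A y) * rmap A x y = rmap B x y * 0\<^sub>m (rdim B x) (rdim A x)"
    using is_rep_rmap_carrier[OF A xy] is_rep_rmap_carrier[OF B xy] by simp
qed simp

lemma rhom_block_diag:
  assumes "is_rep m n S A" "is_rep m n S B" "is_rep m n S A'" "is_rep m n S B'"
    and f: "rhom m n S A A' f" and g: "rhom m n S B B' g"
  shows "rhom m n S (bsum A B) (bsum A' B') (\<lambda>x. block_diag (f x) (g x))"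
  unfolding rhom_def
proof (intro conjI ballI impI)
  fix x assume "x \<in> S"
  thus "block_diag (f x) (g x) \<in> carrier_mat (rdim (bsum A' B') x) (rdim (bsum A B) x)"
    using rhom_carrier[OF f] rhom_carrier[OF g] by simp
next
  fix x y assume xy: "x \<in> S" "y \<in> S" "leq m n x y"
  note c = rhom_carrier[OF f xy(1)] rhom_carrier[OF g xy(1)] rhom_carrier[OF f xy(2)] rhom_carrier[OF g xy(2)]
    is_rep_rmap_carrier[OF assms(1) xy] is_rep_rmap_carrier[OF assms(2) xy]
    is_rep_rmap_carrier[OF assms(3) xy] is_rep_rmap_carrier[OF assms(4) xy]
  show "block_diag (f y) (g y) * rmap (bsum A B) x y = rmap (bsum A' B') x y * block_diag (f x) (g x)"
    using block_diag_mult[OF c(3,4,5,6)] block_diag_mult[OF c(7,8,1,2)]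
      rhom_commute[OF f xy] rhom_commute[OF g xy] by simp
qed

lemma
  assumes A: "is_rep m n S A" and B: "is_rep m n S B"
  shows rhom_inl: "rhom m n S A (bsum A B) (\<lambda>x. inl (rdim A x) (rdim B x))"
    and rhom_inr: "rhom m n S B (bsum A B) (\<lambda>x. inr (rdim A x) (rdim B x))"
    and rhom_prl: "rhom m n S (bsum A B) A (\<lambda>x. prl (rdim A x) (rdim B x))"
    and rhom_prr: "rhom m n S (bsum A B) B (\<lambda>x. prr (rdim A x) (rdim B x))"
proof -
  have O: "is_rep m n S (dsum [])" using is_rep_dsum[of S m n "[]"] A unfolding is_rep_def by auto
  show "rhom m n S A (bsum A B) (\<lambda>x. inl (rdim A x) (rdim B x))"
    using rhom_block_diag[OF A O A B rhom_id[OF A] rhom_zero[OF O B]]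
    by (simp add: bsum_dsum_Nil inl_def)
  show "rhom m n S B (bsum A B) (\<lambda>x. inr (rdim A x) (rdim B x))"
    using rhom_block_diag[OF O B A B rhom_zero[OF O A] rhom_id[OF B]]
    by (simp add: bsum_dsum_Nil inr_def)
  show "rhom m n S (bsum A B) A (\<lambda>x. prl (rdim A x) (rdim B x))"
    using rhom_block_diag[OF A B A O rhom_id[OF A] rhom_zero[OF B O]]
    by (simp add: bsum_dsum_Nil prl_def)
  show "rhom m n S (bsum A B) B (\<lambda>x. prr (rdim A x) (rdim B x))"
    using rhom_block_diag[OF A B O B rhom_zero[OF A O] rhom_id[OF B]]
    by (simp add: bsum_dsum_Nil prr_def)
qed

lemma iso_rep_bsum:
  assumes A: "is_rep m n S A" and A': "is_rep m n S A'" and B: "is_rep m n S B" and B': "is_rep m n S B'"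
    and iA: "iso_rep m n S A A'" and iB: "iso_rep m n S B B'"
  shows "iso_rep m n S (bsum A B) (bsum A' B')"
proof -
  obtain f g where fg: "rhom m n S A A' f" "rhom m n S A' A g"
    "\<And>x. x \<in> S \<Longrightarrow> g x * f x = 1\<^sub>m (rdim A x)" "\<And>x. x \<in> S \<Longrightarrow> f x * g x = 1\<^sub>m (rdim A' x)"
    using iso_rep_rhomsE[OF A A' iA] by blast
  obtain f' g' where fg': "rhom m n S B B' f'" "rhom m n S B' B g'"
    "\<And>x. x \<in> S \<Longrightarrow> g' x * f' x = 1\<^sub>m (rdim B x)" "\<And>x. x \<in> S \<Longrightarrow> f' x * g' x = 1\<^sub>m (rdim B' x)"
    using iso_rep_rhomsE[OF B B' iB] by blast
  show ?thesis
  proof (rule iso_rep_of_rhoms[OF rhom_block_diag[OF A B A' B' fg(1) fg'(1)] rhom_block_diag[OF A' B' A B fg(2) fg'(2)]])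
    fix x assume x: "x \<in> S"
    note c = rhom_carrier[OF fg(1) x] rhom_carrier[OF fg(2) x] rhom_carrier[OF fg'(1) x] rhom_carrier[OF fg'(2) x]
    show "block_diag (g x) (g' x) * block_diag (f x) (f' x) = 1\<^sub>m (rdim (bsum A B) x)"
      using block_diag_mult[OF c(2,4,1,3)] fg(3)[OF x] fg'(3)[OF x] by simp
    show "block_diag (f x) (f' x) * block_diag (g x) (g' x) = 1\<^sub>m (rdim (bsum A' B') x)"
      using block_diag_mult[OF c(1,3,2,4)] fg(4)[OF x] fg'(4)[OF x] by simp
    show "rdim (bsum A B) x = rdim (bsum A' B') x"
      using iso_rep_rdim[OF iA x] iso_rep_rdim[OF iB x] by simp
  qed
qed

lemma finite_grid: "finite (grid m n)"
  unfolding grid_def by simp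

lemma iso_rep_dsum_Nil:
  assumes M: "is_rep m n S M" and "\<not> nonzero_rep S M"
  shows "iso_rep m n S M (dsum [])"
proof (rule iso_rep_eqI[OF M])
  fix x y assume xy: "x \<in> S" "y \<in> S" "leq m n x y"
  hence "rmap M x y \<in> carrier_mat 0 0"
    using is_rep_rmap_carrier[OF M xy] assms(2) unfolding nonzero_rep_def by auto
  thus "rmap M x y = rmap (dsum []) x y" by (intro eq_matI) auto
qed (use assms(2) in \<open>auto simp: nonzero_rep_def\<close>)

lemma KS_decomp_exists:
  fixes M :: "'a::field rep"
  assumes Sg: "S \<subseteq> grid m n" and M: "is_rep m n S M"
  shows "\<exists>Ls. KS_decomp m n S M Ls"
  using M
proof (induction "\<Sum>x\<in>S. rdim M x" arbitrary: M rule: less_induct)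
  case less
  have fin: "finite S" using finite_subset[OF Sg finite_grid] .
  show ?case
  proof (cases "nonzero_rep S M")
    case False
    thus ?thesis using iso_rep_dsum_Nil[OF less.prems] unfolding KS_decomp_def
      by (intro exI[of _ "[]"]) auto
  next
    case nz: True
    show ?thesis
    proof (cases "indecomposable m n S M")
      case True
      thus ?thesis using iso_rep_refl[OF less.prems] unfolding KS_decomp_def
        by (intro exI[of _ "[M]"]) (simp add: dsum_single)
    next
      case False
      then obtain A B where AB: "is_rep m n S A" "is_rep m n S B" "nonzero_rep S A" "nonzero_rep S B"
        and "iso_rep m n S M (dsum [A, B])"
        using nz less.prems unfolding indecomposable_def by blast
      hence iso: "iso_rep m n S M (bsum A B)" by (simp only: dsum_pair)
      have sumM: "(\<Sum>x\<in>S. rdim M x) = (\<Sum>x\<in>S. rdim A x) + (\<Sum>x\<in>S. rdim B x)"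
        using iso_rep_rdim[OF iso] by (simp add: sum.distrib)
      have "0 < (\<Sum>x\<in>S. rdim A x)" "0 < (\<Sum>x\<in>S. rdim B x)"
        using AB(3,4) fin unfolding nonzero_rep_def by (metis gr0I sum_eq_0_iff)+
      hence "(\<Sum>x\<in>S. rdim A x) < (\<Sum>x\<in>S. rdim M x)" "(\<Sum>x\<in>S. rdim B x) < (\<Sum>x\<in>S. rdim M x)"
        using sumM by linarith+
      then obtain LA LB where LA: "KS_decomp m n S A LA" and LB: "KS_decomp m n S B LB"
        using less.hyps[OF _ AB(1)] less.hyps[OF _ AB(2)] by blast
      have dA: "is_rep m n S (dsum LA)" and dB: "is_rep m n S (dsum LB)"
        using is_rep_dsum[OF Sg] LA LB unfolding KS_decomp_def indecomposable_def by auto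
      have "iso_rep m n S (bsum A B) (bsum (dsum LA) (dsum LB))"
        by (rule iso_rep_bsum[OF AB(1) dA AB(2) dB]) (use LA LB in \<open>auto simp: KS_decomp_def\<close>)
      hence "iso_rep m n S M (dsum (LA @ LB))"
        unfolding dsum_append
        by (rule iso_rep_trans[OF less.prems is_rep_bsum[OF AB(1,2)] is_rep_bsum[OF dA dB] iso])
      thus ?thesis using LA LB unfolding KS_decomp_def by (intro exI[of _ "LA @ LB"]) auto
    qed
  qed
qed

section \<open>Thin representations\<close>

lemma rdim_intv_rep [simp]: "rdim (intv_rep I) x = (if x \<in> I then 1 else 0)"
  by (simp add: intv_rep_def)

lemma rmap_intv_rep_in: "x \<in> I \<Longrightarrow> y \<in> I \<Longrightarrow> rmap (intv_rep I) x y = 1\<^sub>m 1"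
  by (simp add: intv_rep_def)

lemma rmap_intv_rep_carrier [simp]:
  "rmap (intv_rep I) x y \<in> carrier_mat (if y \<in> I then 1 else 0) (if x \<in> I then 1 else 0)"
  and dim_rmap_intv_rep [simp]:
  "dim_row (rmap (intv_rep I) x y) = (if y \<in> I then 1 else 0)"
  "dim_col (rmap (intv_rep I) x y) = (if x \<in> I then 1 else 0)"
  by (simp_all add: intv_rep_def)

lemma is_rep_intv_rep:
  assumes "S \<subseteq> grid m n"
    and conv: "\<And>x y z. x \<in> S \<Longrightarrow> y \<in> S \<Longrightarrow> z \<in> S \<Longrightarrow> leq m n x y \<Longrightarrow> leq m n y z \<Longrightarrow>
      x \<in> I \<Longrightarrow> z \<in> I \<Longrightarrow> y \<in> I"
  shows "is_rep m n S (intv_rep I :: 'a::field rep)"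
  unfolding is_rep_def
proof (intro conjI ballI impI)
  fix x assume "x \<in> S"
  show "rmap (intv_rep I) x x = (1\<^sub>m (rdim (intv_rep I :: 'a rep) x) :: 'a mat)"
    by (cases "x \<in> I") (auto simp: intv_rep_def)
next
  fix x y z assume xyz: "x \<in> S" "y \<in> S" "z \<in> S" "leq m n x y" "leq m n y z"
  let ?R = "rmap (intv_rep I :: 'a rep)"
  show "?R y z * ?R x y = ?R x z"
  proof (cases "x \<in> I \<and> z \<in> I")
    case True
    thus ?thesis using conv[OF xyz] by (simp add: rmap_intv_rep_in)
  next
    case False
    \<comment> \<open>then both sides have no rows or no columns\<close>
    have c: "?R y z * ?R x y \<in> carrier_mat (if z \<in> I then 1 else 0) (if x \<in> I then 1 else 0)"
      "?R x z \<in> carrier_mat (if z \<in> I then 1 else 0) (if x \<in> I then 1 else 0)"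
      by (rule mult_carrier_mat[OF rmap_intv_rep_carrier rmap_intv_rep_carrier], simp)
    show ?thesis
    proof (cases "x \<in> I")
      case True
      with False have "z \<notin> I" by simp
      thus ?thesis using c True by (intro eq_matI) auto
    next
      case x: False
      have "?R y z * ?R x y = 0\<^sub>m (if z \<in> I then 1 else 0) 0" "?R x z = 0\<^sub>m (if z \<in> I then 1 else 0) 0"
        by (intro empty_col_mat; use c x in simp)+
      thus ?thesis by simp
    qed
  qed
qed (use assms(1) in simp_all)

lemma is_rep_intv_rep_interval:
  assumes "S \<subseteq> grid m n" "is_interval m n J"
  shows "is_rep m n S (intv_rep J :: 'a::field rep)"
  using assms unfolding is_interval_def convex_set_def by (intro is_rep_intv_rep) blast+

definition zigzag_connected :: "nat \<Rightarrow> nat \<Rightarrow> vtx set \<Rightarrow> bool" where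
  "zigzag_connected m n D \<longleftrightarrow>
     (\<forall>x\<in>D. \<forall>y\<in>D. (\<lambda>a b. a \<in> D \<and> b \<in> D \<and> (leq m n a b \<or> leq m n b a))\<^sup>*\<^sup>* x y)"

lemma intv_rep_composite_eq:
  assumes N: "is_rep m n S N" and F: "rhom m n S (intv_rep I) N F" and G: "rhom m n S N (intv_rep I) G"
    and xy: "x \<in> S" "y \<in> S" "leq m n x y" "x \<in> I" "y \<in> I"
  shows "G y * F y = G x * F x"
proof -
  have Fx: "F x \<in> carrier_mat (rdim N x) 1" and Fy: "F y \<in> carrier_mat (rdim N y) 1"
    and Gx: "G x \<in> carrier_mat 1 (rdim N x)" and Gy: "G y \<in> carrier_mat 1 (rdim N y)"
    using rhom_carrier[OF F xy(1)] rhom_carrier[OF F xy(2)] rhom_carrier[OF G xy(1)] rhom_carrier[OF G xy(2)] xy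
    by simp_all
  have f: "F y = rmap N x y * F x"
    using rhom_commute[OF F xy(1-3)] Fy unfolding rmap_intv_rep_in[OF xy(4,5)] by simp
  have g: "G y * rmap N x y = G x"
    using rhom_commute[OF G xy(1-3)] Gx unfolding rmap_intv_rep_in[OF xy(4,5)] by simp
  show ?thesis
    unfolding f using assoc_mult_mat[OF Gy is_rep_rmap_carrier[OF N xy(1-3)] Fx] g by simp
qed

lemma intv_rep_composite_const:
  assumes N: "is_rep m n S N" and F: "rhom m n S (intv_rep I) N F" and G: "rhom m n S N (intv_rep I) G"
    and conn: "zigzag_connected m n (S \<inter> I)" and x: "x \<in> S \<inter> I" and y: "y \<in> S \<inter> I"
  shows "G y * F y = G x * F x"
proof -
  have "(\<lambda>a b. a \<in> S \<inter> I \<and> b \<in> S \<inter> I \<and> (leq m n a b \<or> leq m n b a))\<^sup>*\<^sup>* x y"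
    using conn x y unfolding zigzag_connected_def by blast
  thus ?thesis
  proof (induction rule: rtranclp_induct)
    case (step b c)
    hence "G c * F c = G b * F b"
      using intv_rep_composite_eq[OF N F G, of b c] intv_rep_composite_eq[OF N F G, of c b] by auto
    thus ?case using step.IH by simp
  qed simp
qed

definition conj_rep :: "'a::field rep \<Rightarrow> (vtx \<Rightarrow> 'a mat) \<Rightarrow> (vtx \<Rightarrow> 'a mat) \<Rightarrow> 'a rep" where
  "conj_rep N P P' = \<lparr>rdim = rdim N, rmap = (\<lambda>x y. P y * rmap N x y * P' x)\<rparr>"

lemma rdim_conj_rep [simp]: "rdim (conj_rep N P P') = rdim N"
  and rmap_conj_rep: "rmap (conj_rep N P P') x y = P y * rmap N x y * P' x"
  by (simp_all add: conj_rep_def)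

lemma
  assumes N: "is_rep m n S N"
    and P: "\<And>x. x \<in> S \<Longrightarrow> P x \<in> carrier_mat (rdim N x) (rdim N x)"
    and P': "\<And>x. x \<in> S \<Longrightarrow> P' x \<in> carrier_mat (rdim N x) (rdim N x)"
    and PP': "\<And>x. x \<in> S \<Longrightarrow> P x * P' x = 1\<^sub>m (rdim N x)"
    and P'P: "\<And>x. x \<in> S \<Longrightarrow> P' x * P x = 1\<^sub>m (rdim N x)"
  shows is_rep_conj_rep: "is_rep m n S (conj_rep N P P')"
    and iso_rep_conj_rep: "iso_rep m n S N (conj_rep N P P')"
proof -
  note R = is_rep_rmap_carrier[OF N]
  have R': "P y * rmap N x y * P' x \<in> carrier_mat (rdim N y) (rdim N x)"
    if "x \<in> S" "y \<in> S" "leq m n x y" for x y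
    using P[OF that(2)] R[OF that] P'[OF that(1)] by (meson mult_carrier_mat)
  show "is_rep m n S (conj_rep N P P')"
    unfolding is_rep_def rdim_conj_rep rmap_conj_rep
  proof (intro conjI ballI impI)
    show "S \<subseteq> grid m n" using N unfolding is_rep_def by blast
  next
    fix x assume x: "x \<in> S"
    show "P x * rmap N x x * P' x = 1\<^sub>m (rdim N x)"
      using P[OF x] PP'[OF x] is_rep_rmap_id[OF N x] by simp
  next
    fix x y z assume xyz: "x \<in> S" "y \<in> S" "z \<in> S" "leq m n x y" "leq m n y z"
    have "P z * rmap N y z * P' y * (P y * rmap N x y * P' x)
        = P z * rmap N y z * (P' y * P y) * (rmap N x y * P' x)"
      using mat_mult_assoc4[OF mult_carrier_mat[OF P[OF xyz(3)] R[OF xyz(2,3,5)]] P'[OF xyz(2)]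
          P[OF xyz(2)] mult_carrier_mat[OF R[OF xyz(1,2,4)] P'[OF xyz(1)]]]
        assoc_mult_mat[OF P[OF xyz(2)] R[OF xyz(1,2,4)] P'[OF xyz(1)]] by simp
    also have "\<dots> = P z * (rmap N y z * rmap N x y) * P' x"
      using mat_mult_assoc4[OF P[OF xyz(3)] R[OF xyz(2,3,5)] R[OF xyz(1,2,4)] P'[OF xyz(1)]]
        P'P[OF xyz(2)] P[OF xyz(3)] R[OF xyz(2,3,5)] by simp
    finally show "P z * rmap N y z * P' y * (P y * rmap N x y * P' x) = P z * rmap N x z * P' x"
      using is_rep_rmap_comp[OF N xyz] by simp
  qed (use R' in auto)
  show "iso_rep m n S N (conj_rep N P P')"
  proof (rule iso_rep_of_rhoms)
    show "rhom m n S N (conj_rep N P P') P"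
      unfolding rhom_def rdim_conj_rep rmap_conj_rep
    proof (intro conjI ballI impI)
      fix x y assume xy: "x \<in> S" "y \<in> S" "leq m n x y"
      have "P y * rmap N x y * P' x * P x = P y * rmap N x y * (P' x * P x)"
        by (rule assoc_mult_mat[OF mult_carrier_mat[OF P[OF xy(2)] R[OF xy]] P'[OF xy(1)] P[OF xy(1)]])
      thus "P y * rmap N x y = P y * rmap N x y * P' x * P x"
        using P'P[OF xy(1)] P[OF xy(2)] R[OF xy] by simp
    qed (use P in simp)
    show "rhom m n S (conj_rep N P P') N P'"
      unfolding rhom_def rdim_conj_rep rmap_conj_rep
    proof (intro conjI ballI impI)
      fix x y assume xy: "x \<in> S" "y \<in> S" "leq m n x y"
      have "P' y * (P y * rmap N x y * P' x) = (P' y * P y) * (rmap N x y * P' x)"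
        using assoc_mult_mat[OF P'[OF xy(2)] P[OF xy(2)] mult_carrier_mat[OF R[OF xy] P'[OF xy(1)]]]
          assoc_mult_mat[OF P[OF xy(2)] R[OF xy] P'[OF xy(1)]] by simp
      thus "P' y * (P y * rmap N x y * P' x) = rmap N x y * P' x"
        using P'P[OF xy(2)] R[OF xy] P'[OF xy(1)] by simp
    qed (use P' in simp)
  qed (use P'P PP' in simp_all)
qed

lemma iso_rep_bsum_of_block_diag:
  assumes X: "is_rep m n S X" and T: "is_rep m n S T"
    and le: "\<And>x. x \<in> S \<Longrightarrow> rdim T x \<le> rdim X x"
    and B: "\<And>x y. B x y \<in> carrier_mat (rdim X y - rdim T y) (rdim X x - rdim T x)"
    and blk: "\<And>x y. x \<in> S \<Longrightarrow> y \<in> S \<Longrightarrow> leq m n x y \<Longrightarrow> rmap X x y = block_diag (rmap T x y) (B x y)"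
  defines "Q \<equiv> \<lparr>rdim = \<lambda>x. rdim X x - rdim T x, rmap = B\<rparr>"
  shows "is_rep m n S Q" "iso_rep m n S X (bsum T Q)"
proof -
  note Tc = is_rep_rmap_carrier[OF T]
  show Q: "is_rep m n S Q"
    unfolding is_rep_def
  proof (intro conjI ballI impI)
    show "S \<subseteq> grid m n" using X unfolding is_rep_def by blast
  next
    fix x assume x: "x \<in> S"
    have xx: "leq m n x x" using leq_refl X x unfolding is_rep_def by blast
    have "block_diag (rmap T x x) (B x x) = block_diag (1\<^sub>m (rdim T x)) (1\<^sub>m (rdim X x - rdim T x))"
      using blk[OF x x xx] is_rep_rmap_id[OF X x] le[OF x] by simp
    from block_diag_inj(2)[OF this Tc[OF x x xx] _ B one_carrier_mat]
    show "rmap Q x x = 1\<^sub>m (rdim Q x)" unfolding Q_def by simp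
  next
    fix x y z assume xyz: "x \<in> S" "y \<in> S" "z \<in> S" "leq m n x y" "leq m n y z"
    have xz: "leq m n x z" using leq_trans xyz(4,5) .
    have "block_diag (rmap T x z) (B y z * B x y) = block_diag (rmap T x z) (B x z)"
      using block_diag_mult[OF Tc[OF xyz(2,3,5)] B Tc[OF xyz(1,2,4)] B]
        is_rep_rmap_comp[OF T xyz] is_rep_rmap_comp[OF X xyz] blk[OF xyz(2,3,5)] blk[OF xyz(1,2,4)]
        blk[OF xyz(1,3) xz] by simp
    from block_diag_inj(2)[OF this Tc[OF xyz(1,3) xz] Tc[OF xyz(1,3) xz] mult_carrier_mat[OF B B] B]
    show "rmap Q y z * rmap Q x y = rmap Q x z" unfolding Q_def by simp
  qed (use B in \<open>simp add: Q_def\<close>)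
  show "iso_rep m n S X (bsum T Q)"
    by (rule iso_rep_eqI[OF X]) (use le blk in \<open>simp_all add: Q_def\<close>)
qed

lemma iso_rep_bsum_null:
  assumes T: "is_rep m n S T" and Q: "is_rep m n S Q" and "\<not> nonzero_rep S Q"
  shows "iso_rep m n S (bsum T Q) T"
proof -
  have O: "is_rep m n S (dsum [])" using is_rep_dsum[of S m n "[]"] T unfolding is_rep_def by auto
  show ?thesis
    using iso_rep_bsum[OF T T Q O iso_rep_refl[OF T] iso_rep_dsum_Nil[OF Q assms(3)]]
    by (simp add: bsum_dsum_Nil)
qed

text \<open>In a basis adapted to a pair F, G with G F = 1, the structure maps of N contain those of
  the thin representation as a diagonal block.\<close>

context
  fixes m n :: nat and S I :: "vtx set" and N :: "'a::field rep" and F G P P' :: "vtx \<Rightarrow> 'a mat"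
  assumes N: "is_rep m n S N"
    and F: "rhom m n S (intv_rep I) N F" and G: "rhom m n S N (intv_rep I) G"
    and P: "\<And>x. x \<in> S \<Longrightarrow> P x \<in> carrier_mat (rdim N x) (rdim N x)"
    and P': "\<And>x. x \<in> S \<Longrightarrow> P' x \<in> carrier_mat (rdim N x) (rdim N x)"
    and P'P: "\<And>x. x \<in> S \<Longrightarrow> P' x * P x = 1\<^sub>m (rdim N x)"
    and PF: "\<And>x. x \<in> S \<Longrightarrow> x \<in> I \<Longrightarrow> P x * F x = unit_col (rdim N x)"
    and GP': "\<And>x. x \<in> S \<Longrightarrow> x \<in> I \<Longrightarrow> G x * P' x = unit_row (rdim N x)"
    and pos: "\<And>x. x \<in> S \<Longrightarrow> x \<in> I \<Longrightarrow> 0 < rdim N x"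
begin

lemma conj_rep_carrier:
  "x \<in> S \<Longrightarrow> y \<in> S \<Longrightarrow> leq m n x y \<Longrightarrow> rmap (conj_rep N P P') x y \<in> carrier_mat (rdim N y) (rdim N x)"
  unfolding rmap_conj_rep by (meson P P' is_rep_rmap_carrier[OF N] mult_carrier_mat)

lemma conj_rep_first_col:
  assumes xy: "x \<in> S" "y \<in> S" "leq m n x y" and xI: "x \<in> I" and i: "i < rdim N y"
  shows "rmap (conj_rep N P P') x y $$ (i, 0) = (if y \<in> I \<and> i = 0 then 1 else 0)"
proof -
  let ?T = "intv_rep I :: 'a rep"
  note R = is_rep_rmap_carrier[OF N xy]
  have Fx: "F x \<in> carrier_mat (rdim N x) 1" and Fy: "F y \<in> carrier_mat (rdim N y) (if y \<in> I then 1 else 0)"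
    using rhom_carrier[OF F xy(1)] rhom_carrier[OF F xy(2)] xI by auto
  have "P' x * unit_col (rdim N x) = F x"
    using assoc_mult_mat[OF P'[OF xy(1)] P[OF xy(1)] Fx] PF[OF xy(1) xI] P'P[OF xy(1)] Fx by simp
  hence "rmap (conj_rep N P P') x y * unit_col (rdim N x) = P y * (F y * rmap ?T x y)"
    using assoc_mult_mat[OF mult_carrier_mat[OF P[OF xy(2)] R] P'[OF xy(1)] unit_col_carrier]
      assoc_mult_mat[OF P[OF xy(2)] R Fx] rhom_commute[OF F xy] by (simp add: rmap_conj_rep)
  also have "\<dots> = (if y \<in> I then unit_col (rdim N y) else 0\<^sub>m (rdim N y) 1)"
  proof (cases "y \<in> I")
    case False
    hence "F y * rmap ?T x y = 0\<^sub>m (rdim N y) 1"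
      using Fy xI rmap_intv_rep_carrier[of I x y] by (intro mult_empty_mat) auto
    thus ?thesis using P[OF xy(2)] False by simp
  qed (use PF[OF xy(2)] Fy xI in \<open>simp add: rmap_intv_rep_in\<close>)
  finally have e: "rmap (conj_rep N P P') x y * unit_col (rdim N x) = \<dots>" .
  have "rmap (conj_rep N P P') x y $$ (i, 0) = (rmap (conj_rep N P P') x y * unit_col (rdim N x)) $$ (i, 0)"
    using mult_unit_col_index[OF conj_rep_carrier[OF xy] pos[OF xy(1) xI] i] by simp
  also have "\<dots> = (if y \<in> I \<and> i = 0 then 1 else 0)" unfolding e using i by (auto simp: unit_col_def)
  finally show ?thesis .
qed

lemma conj_rep_first_row:
  assumes xy: "x \<in> S" "y \<in> S" "leq m n x y" and yI: "y \<in> I" and j: "j < rdim N x"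
  shows "rmap (conj_rep N P P') x y $$ (0, j) = (if x \<in> I \<and> j = 0 then 1 else 0)"
proof -
  let ?T = "intv_rep I :: 'a rep"
  note R = is_rep_rmap_carrier[OF N xy]
  have Gy: "G y \<in> carrier_mat 1 (rdim N y)" and Gx: "G x \<in> carrier_mat (if x \<in> I then 1 else 0) (rdim N x)"
    using rhom_carrier[OF G xy(1)] rhom_carrier[OF G xy(2)] yI by auto
  have "unit_row (rdim N y) * P y = G y"
    using assoc_mult_mat[OF Gy P'[OF xy(2)] P[OF xy(2)]] GP'[OF xy(2) yI] P'P[OF xy(2)] Gy by simp
  hence "unit_row (rdim N y) * rmap (conj_rep N P P') x y = rmap ?T x y * (G x * P' x)"
    using assoc_mult_mat[OF unit_row_carrier P[OF xy(2)] mult_carrier_mat[OF R P'[OF xy(1)]]]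
      assoc_mult_mat[OF P[OF xy(2)] R P'[OF xy(1)]] assoc_mult_mat[OF Gy R P'[OF xy(1)]]
      assoc_mult_mat[OF rmap_intv_rep_carrier Gx P'[OF xy(1)]] rhom_commute[OF G xy]
    by (simp add: rmap_conj_rep)
  also have "\<dots> = (if x \<in> I then unit_row (rdim N x) else 0\<^sub>m 1 (rdim N x))"
  proof (cases "x \<in> I")
    case False
    hence "rmap ?T x y * G x = 0\<^sub>m 1 (rdim N x)"
      using Gx yI rmap_intv_rep_carrier[of I x y] by (intro mult_empty_mat) auto
    thus ?thesis
      using assoc_mult_mat[OF rmap_intv_rep_carrier Gx P'[OF xy(1)], symmetric] P'[OF xy(1)] False by simp
  qed (use GP'[OF xy(1)] Gx yI in \<open>simp add: rmap_intv_rep_in\<close>)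
  finally have e: "unit_row (rdim N y) * rmap (conj_rep N P P') x y = \<dots>" .
  have "rmap (conj_rep N P P') x y $$ (0, j) = (unit_row (rdim N y) * rmap (conj_rep N P P') x y) $$ (0, j)"
    using unit_row_mult_index[OF conj_rep_carrier[OF xy] pos[OF xy(2) yI] j] by simp
  also have "\<dots> = (if x \<in> I \<and> j = 0 then 1 else 0)" unfolding e using j by (auto simp: unit_row_def)
  finally show ?thesis .
qed

lemma conj_rep_block_diag:
  assumes xy: "x \<in> S" "y \<in> S" "leq m n x y"
  defines "d \<equiv> \<lambda>x. rdim (intv_rep I :: 'a rep) x"
  shows "rmap (conj_rep N P P') x y = block_diag (rmap (intv_rep I) x y)
     (mat (rdim N y - d y) (rdim N x - d x) (\<lambda>(i, j). rmap (conj_rep N P P') x y $$ (i + d y, j + d x)))"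
    (is "?X = block_diag ?T ?B")
proof (rule eq_matI)
  have le: "d x \<le> rdim N x" "d y \<le> rdim N y"
    using pos[OF xy(1)] pos[OF xy(2)] unfolding d_def by (auto simp: Suc_le_eq)
  have Tc: "?T \<in> carrier_mat (d y) (d x)" unfolding d_def by simp
  fix i j assume "i < dim_row (block_diag ?T ?B)" "j < dim_col (block_diag ?T ?B)"
  hence ij: "i < rdim N y" "j < rdim N x" using le Tc by auto
  show "?X $$ (i, j) = block_diag ?T ?B $$ (i, j)"
  proof (cases "i < d y")
    case True
    hence "y \<in> I" "i = 0" unfolding d_def by (auto split: if_splits)
    thus ?thesis using conj_rep_first_row[OF xy \<open>y \<in> I\<close> ij(2)] le ij Tc
      by (auto simp: block_diag_def rmap_intv_rep_in d_def)
  next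
    case False
    show ?thesis
    proof (cases "j < d x")
      case True
      hence "x \<in> I" "j = 0" unfolding d_def by (auto split: if_splits)
      thus ?thesis using conj_rep_first_col[OF xy \<open>x \<in> I\<close> ij(1)] False le ij Tc
        by (auto simp: block_diag_def d_def)
    qed (use False le ij in \<open>auto simp: block_diag_def d_def\<close>)
  qed
qed (use conj_rep_carrier[OF xy] pos[OF xy(1)] pos[OF xy(2)] in \<open>auto simp: d_def Suc_le_eq\<close>)

end

lemma adapted_bases:
  fixes N :: "'a::field rep"
  assumes F: "rhom m n S (intv_rep I) N F" and G: "rhom m n S N (intv_rep I) G"
    and GF: "\<And>x. x \<in> S \<Longrightarrow> x \<in> I \<Longrightarrow> G x * F x = 1\<^sub>m 1"
  obtains P P' where "\<And>x. x \<in> S \<Longrightarrow> P x \<in> carrier_mat (rdim N x) (rdim N x)"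
    "\<And>x. x \<in> S \<Longrightarrow> P' x \<in> carrier_mat (rdim N x) (rdim N x)"
    "\<And>x. x \<in> S \<Longrightarrow> P x * P' x = 1\<^sub>m (rdim N x)" "\<And>x. x \<in> S \<Longrightarrow> P' x * P x = 1\<^sub>m (rdim N x)"
    "\<And>x. x \<in> S \<Longrightarrow> x \<in> I \<Longrightarrow> P x * F x = unit_col (rdim N x)"
    "\<And>x. x \<in> S \<Longrightarrow> x \<in> I \<Longrightarrow> G x * P' x = unit_row (rdim N x)"
proof -
  have "\<forall>x\<in>S. \<exists>PP. fst PP \<in> carrier_mat (rdim N x) (rdim N x) \<and> snd PP \<in> carrier_mat (rdim N x) (rdim N x) \<and>
      fst PP * snd PP = 1\<^sub>m (rdim N x) \<and> snd PP * fst PP = 1\<^sub>m (rdim N x) \<and>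
      (x \<in> I \<longrightarrow> fst PP * F x = unit_col (rdim N x) \<and> G x * snd PP = unit_row (rdim N x))"
  proof
    fix x assume x: "x \<in> S"
    show "\<exists>PP. fst PP \<in> carrier_mat (rdim N x) (rdim N x) \<and> snd PP \<in> carrier_mat (rdim N x) (rdim N x) \<and>
      fst PP * snd PP = 1\<^sub>m (rdim N x) \<and> snd PP * fst PP = 1\<^sub>m (rdim N x) \<and>
      (x \<in> I \<longrightarrow> fst PP * F x = unit_col (rdim N x) \<and> G x * snd PP = unit_row (rdim N x))"
    proof (cases "x \<in> I")
      case True
      obtain P P' where "P \<in> carrier_mat (rdim N x) (rdim N x)" "P' \<in> carrier_mat (rdim N x) (rdim N x)"
        "P * P' = 1\<^sub>m (rdim N x)" "P' * P = 1\<^sub>m (rdim N x)"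
        "P * F x = unit_col (rdim N x)" "G x * P' = unit_row (rdim N x)"
        by (rule dual_pair_normal_form[of "F x" "rdim N x" "G x"])
          (use rhom_carrier[OF F x] rhom_carrier[OF G x] GF[OF x True] True in simp_all)
      thus ?thesis by (intro exI[of _ "(P, P')"]) simp
    qed (intro exI[of _ "(1\<^sub>m (rdim N x), 1\<^sub>m (rdim N x))"], simp)
  qed
  then obtain PP where PP: "\<forall>x\<in>S.
      fst (PP x) \<in> carrier_mat (rdim N x) (rdim N x) \<and> snd (PP x) \<in> carrier_mat (rdim N x) (rdim N x) \<and>
      fst (PP x) * snd (PP x) = 1\<^sub>m (rdim N x) \<and> snd (PP x) * fst (PP x) = 1\<^sub>m (rdim N x) \<and>
      (x \<in> I \<longrightarrow> fst (PP x) * F x = unit_col (rdim N x) \<and> G x * snd (PP x) = unit_row (rdim N x))"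
    by (rule bchoice[elim_format]) blast
  define P where "P = (\<lambda>x. fst (PP x))"
  define P' where "P' = (\<lambda>x. snd (PP x))"
  have P: "\<And>x. x \<in> S \<Longrightarrow> P x \<in> carrier_mat (rdim N x) (rdim N x)"
    and P': "\<And>x. x \<in> S \<Longrightarrow> P' x \<in> carrier_mat (rdim N x) (rdim N x)"
    and PP': "\<And>x. x \<in> S \<Longrightarrow> P x * P' x = 1\<^sub>m (rdim N x)"
    and P'P: "\<And>x. x \<in> S \<Longrightarrow> P' x * P x = 1\<^sub>m (rdim N x)"
    and PF: "\<And>x. x \<in> S \<Longrightarrow> x \<in> I \<Longrightarrow> P x * F x = unit_col (rdim N x)"
    and GP': "\<And>x. x \<in> S \<Longrightarrow> x \<in> I \<Longrightarrow> G x * P' x = unit_row (rdim N x)"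
    using PP unfolding P_def P'_def by auto
  show thesis by (rule that[OF P P' PP' P'P PF GP'])
qed

lemma intv_rep_summand:
  fixes N :: "'a::field rep"
  assumes N: "is_rep m n S N" and T: "is_rep m n S (intv_rep I :: 'a rep)"
    and F: "rhom m n S (intv_rep I) N F" and G: "rhom m n S N (intv_rep I) G"
    and GF: "\<And>x. x \<in> S \<Longrightarrow> x \<in> I \<Longrightarrow> G x * F x = 1\<^sub>m 1"
  obtains Q where "is_rep m n S Q" "iso_rep m n S N (bsum (intv_rep I) Q)"
proof -
  let ?T = "intv_rep I :: 'a rep"
  have pos: "0 < rdim N x" if x: "x \<in> S" "x \<in> I" for x
  proof (rule ccontr)
    assume "\<not> 0 < rdim N x"
    hence "G x * F x = 0\<^sub>m 1 1"
      using rhom_carrier[OF F x(1)] rhom_carrier[OF G x(1)] x(2) by (intro mult_empty_mat) auto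
    hence "(1\<^sub>m 1 :: 'a mat) = 0\<^sub>m 1 1" using GF[OF x] by simp
    from arg_cong[OF this, of "\<lambda>A. A $$ (0, 0)"] show False by simp
  qed
  obtain P P' where P: "\<And>x. x \<in> S \<Longrightarrow> P x \<in> carrier_mat (rdim N x) (rdim N x)"
    and P': "\<And>x. x \<in> S \<Longrightarrow> P' x \<in> carrier_mat (rdim N x) (rdim N x)"
    and PP': "\<And>x. x \<in> S \<Longrightarrow> P x * P' x = 1\<^sub>m (rdim N x)"
    and P'P: "\<And>x. x \<in> S \<Longrightarrow> P' x * P x = 1\<^sub>m (rdim N x)"
    and PF: "\<And>x. x \<in> S \<Longrightarrow> x \<in> I \<Longrightarrow> P x * F x = unit_col (rdim N x)"
    and GP': "\<And>x. x \<in> S \<Longrightarrow> x \<in> I \<Longrightarrow> G x * P' x = unit_row (rdim N x)"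
    using adapted_bases[OF F G GF] by blast
  let ?X = "conj_rep N P P'"
  have X: "is_rep m n S ?X" and NX: "iso_rep m n S N ?X"
    using is_rep_conj_rep[OF N P P' PP' P'P] iso_rep_conj_rep[OF N P P' PP' P'P] by auto
  define B where "B = (\<lambda>x y. mat (rdim N y - rdim ?T y) (rdim N x - rdim ?T x)
    (\<lambda>(i, j). rmap ?X x y $$ (i + rdim ?T y, j + rdim ?T x)))"
  have blk: "rmap ?X x y = block_diag (rmap ?T x y) (B x y)" if "x \<in> S" "y \<in> S" "leq m n x y" for x y
    unfolding B_def by (rule conj_rep_block_diag[OF N F G P P' P'P PF GP' pos that])
  have le: "rdim ?T x \<le> rdim N x" if "x \<in> S" for x using pos[OF that] by (simp add: Suc_le_eq)
  have Bc: "B x y \<in> carrier_mat (rdim ?X y - rdim ?T y) (rdim ?X x - rdim ?T x)" for x y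
    unfolding B_def by simp
  obtain Q where Q: "is_rep m n S Q" "iso_rep m n S ?X (bsum ?T Q)"
    using iso_rep_bsum_of_block_diag[OF X T _ Bc blk] le by fastforce
  show thesis
    by (rule that[OF Q(1) iso_rep_trans[OF N X is_rep_bsum[OF T Q(1)] NX Q(2)]])
qed

definition null_rep :: "nat \<Rightarrow> nat \<Rightarrow> vtx set \<Rightarrow> 'a::field rep \<Rightarrow> vtx \<Rightarrow> 'a rep \<Rightarrow> bool" where
  "null_rep m n S T x0 X \<longleftrightarrow>
     (\<forall>F G. rhom m n S T X F \<longrightarrow> rhom m n S X T G \<longrightarrow> (G x0 * F x0) $$ (0, 0) = 0)"

lemma indecomposable_iso_or_null:
  fixes N :: "'a::field rep"
  assumes T: "is_rep m n S (intv_rep I :: 'a rep)"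
    and conn: "zigzag_connected m n (S \<inter> I)" and x0: "x0 \<in> S \<inter> I"
    and ind: "indecomposable m n S N"
  shows "iso_rep m n S N (intv_rep I) \<or> null_rep m n S (intv_rep I) x0 N"
proof (rule disjCI)
  let ?T = "intv_rep I :: 'a rep"
  assume "\<not> null_rep m n S ?T x0 N"
  then obtain F G where F: "rhom m n S ?T N F" and G: "rhom m n S N ?T G" and c: "(G x0 * F x0) $$ (0, 0) \<noteq> 0"
    unfolding null_rep_def by blast
  have N: "is_rep m n S N" using ind unfolding indecomposable_def by blast
  define G' where "G' = (\<lambda>x. (1 / (G x0 * F x0) $$ (0, 0)) \<cdot>\<^sub>m G x)"
  have G': "rhom m n S N ?T G'" unfolding G'_def by (rule rhom_smult[OF N T G])
  have Fc: "F x0 \<in> carrier_mat (rdim N x0) 1" and Gc: "G x0 \<in> carrier_mat 1 (rdim N x0)"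
    using rhom_carrier[OF F, of x0] rhom_carrier[OF G, of x0] x0 by auto
  have "G' x0 * F x0 = (1 / (G x0 * F x0) $$ (0, 0)) \<cdot>\<^sub>m (G x0 * F x0)"
    unfolding G'_def by (rule mult_smult_assoc_mat[OF Gc Fc])
  hence "G' x0 * F x0 = 1\<^sub>m 1" using Fc Gc c by (intro eq_matI) auto
  \<comment> \<open>by zigzag connectivity, the normalised composite is the identity on all of S \<inter> I\<close>
  hence GF: "\<And>x. x \<in> S \<Longrightarrow> x \<in> I \<Longrightarrow> G' x * F x = 1\<^sub>m 1"
    using intv_rep_composite_const[OF N F G' conn _ x0] by auto
  obtain Q where Q: "is_rep m n S Q" "iso_rep m n S N (bsum ?T Q)"
    using intv_rep_summand[OF N T F G' GF] by blast
  have "nonzero_rep S ?T" using x0 unfolding nonzero_rep_def by auto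
  moreover have "\<not> (is_rep m n S ?T \<and> is_rep m n S Q \<and> nonzero_rep S ?T \<and> nonzero_rep S Q \<and>
      iso_rep m n S N (bsum ?T Q))"
    using ind unfolding indecomposable_def dsum_pair by blast
  ultimately have "\<not> nonzero_rep S Q" using T Q by blast
  thus "iso_rep m n S N ?T"
    using iso_rep_trans[OF N is_rep_bsum[OF T Q(1)] T Q(2) iso_rep_bsum_null[OF T Q(1)]] by blast
qed

section \<open>Counting summands isomorphic to a thin representation\<close>

text \<open>d copies of T split off X, as witnessed at the vertex x0.\<close>

definition splits :: "nat \<Rightarrow> nat \<Rightarrow> vtx set \<Rightarrow> 'a::field rep \<Rightarrow> vtx \<Rightarrow> 'a rep \<Rightarrow> nat \<Rightarrow> bool" where
  "splits m n S T x0 X d \<longleftrightarrow> (\<exists>F G. (\<forall>j<d. rhom m n S T X (F j)) \<and> (\<forall>i<d. rhom m n S X T (G i)) \<and>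
     (\<forall>i<d. \<forall>j<d. (G i x0 * F j x0) $$ (0, 0) = (if i = j then 1 else 0)))"

lemma splits_zero: "splits m n S T x0 X 0"
  by (simp add: splits_def)

lemma splits_retract:
  assumes T: "is_rep m n S T" and X: "is_rep m n S X" and Y: "is_rep m n S Y" and x0: "x0 \<in> S"
    and a: "rhom m n S X Y a" and b: "rhom m n S Y X b" and ba: "b x0 * a x0 = 1\<^sub>m (rdim X x0)"
    and sp: "splits m n S T x0 X d"
  shows "splits m n S T x0 Y d"
proof -
  obtain F G where F: "\<And>j. j < d \<Longrightarrow> rhom m n S T X (F j)" and G: "\<And>i. i < d \<Longrightarrow> rhom m n S X T (G i)"
    and GF: "\<And>i j. i < d \<Longrightarrow> j < d \<Longrightarrow> (G i x0 * F j x0) $$ (0, 0) = (if i = j then 1 else 0)"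
    using sp unfolding splits_def by blast
  show ?thesis unfolding splits_def
  proof (rule exI[of _ "\<lambda>j x. a x * F j x"], rule exI[of _ "\<lambda>i x. G i x * b x"], intro conjI allI impI)
    fix j assume "j < d"
    show "rhom m n S T Y (\<lambda>x. a x * F j x)" by (rule rhom_comp[OF T X Y F[OF \<open>j < d\<close>] a])
  next
    fix i assume "i < d"
    show "rhom m n S Y T (\<lambda>x. G i x * b x)" by (rule rhom_comp[OF Y X T b G[OF \<open>i < d\<close>]])
  next
    fix i j assume ij: "i < d" "j < d"
    note c = rhom_carrier[OF G[OF ij(1)] x0] rhom_carrier[OF b x0] rhom_carrier[OF a x0] rhom_carrier[OF F[OF ij(2)] x0]
    show "(G i x0 * b x0 * (a x0 * F j x0)) $$ (0, 0) = (if i = j then 1 else 0)"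
      using mat_mult_assoc4[OF c] ba c GF[OF ij] by simp
  qed
qed

lemma splits_iso:
  assumes T: "is_rep m n S T" and X: "is_rep m n S X" and Y: "is_rep m n S Y" and x0: "x0 \<in> S"
    and iso: "iso_rep m n S X Y" and sp: "splits m n S T x0 X d"
  shows "splits m n S T x0 Y d"
proof -
  obtain f g where f: "rhom m n S X Y f" and g: "rhom m n S Y X g"
    and gf: "\<And>x. x \<in> S \<Longrightarrow> g x * f x = 1\<^sub>m (rdim X x)"
    and "\<And>x. x \<in> S \<Longrightarrow> f x * g x = 1\<^sub>m (rdim Y x)"
    using iso_rep_rhomsE[OF X Y iso] by blast
  show ?thesis by (rule splits_retract[OF T X Y x0 f g gf[OF x0] sp])
qed

lemma splits_self:
  assumes T: "is_rep m n S T" and x0: "x0 \<in> S" and T1: "rdim T x0 = 1"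
  shows "splits m n S T x0 T 1"
  unfolding splits_def using rhom_id[OF T] T1
  by (intro exI[of _ "\<lambda>(_::nat) x. 1\<^sub>m (rdim T x)"]) simp

lemma splits_bsum:
  assumes T: "is_rep m n S T" and A: "is_rep m n S A" and B: "is_rep m n S B" and x0: "x0 \<in> S"
    and T1: "rdim T x0 = 1" and spA: "splits m n S T x0 A a" and spB: "splits m n S T x0 B b"
  shows "splits m n S T x0 (bsum A B) (a + b)"
proof -
  obtain F G where F: "\<And>j. j < a \<Longrightarrow> rhom m n S T A (F j)" and G: "\<And>i. i < a \<Longrightarrow> rhom m n S A T (G i)"
    and GF: "\<And>i j. i < a \<Longrightarrow> j < a \<Longrightarrow> (G i x0 * F j x0) $$ (0, 0) = (if i = j then 1 else 0)"
    using spA unfolding splits_def by blast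
  obtain F' G' where F': "\<And>j. j < b \<Longrightarrow> rhom m n S T B (F' j)" and G': "\<And>i. i < b \<Longrightarrow> rhom m n S B T (G' i)"
    and GF': "\<And>i j. i < b \<Longrightarrow> j < b \<Longrightarrow> (G' i x0 * F' j x0) $$ (0, 0) = (if i = j then 1 else 0)"
    using spB unfolding splits_def by blast
  note X = is_rep_bsum[OF A B]
  let ?l = "\<lambda>M x. M (rdim A x) (rdim B x)"
  define H where "H = (\<lambda>j x. if j < a then ?l inl x * F j x else ?l inr x * F' (j - a) x)"
  define K where "K = (\<lambda>i x. if i < a then G i x * ?l prl x else G' (i - a) x * ?l prr x)"
  have H: "rhom m n S T (bsum A B) (H j)" if "j < a + b" for j
    using rhom_comp[OF T A X F rhom_inl[OF A B]] rhom_comp[OF T B X F' rhom_inr[OF A B]] that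
    unfolding H_def by (cases "j < a") auto
  have K: "rhom m n S (bsum A B) T (K i)" if "i < a + b" for i
    using rhom_comp[OF X A T rhom_prl[OF A B] G] rhom_comp[OF X B T rhom_prr[OF A B] G'] that
    unfolding K_def by (cases "i < a") auto
  have KH: "(K i x0 * H j x0) $$ (0, 0) = (if i = j then 1 else 0)" if ij: "i < a + b" "j < a + b" for i j
  proof -
    have cF: "j < a \<Longrightarrow> F j x0 \<in> carrier_mat (rdim A x0) 1"
      and cF': "\<not> j < a \<Longrightarrow> F' (j - a) x0 \<in> carrier_mat (rdim B x0) 1"
      and cG: "i < a \<Longrightarrow> G i x0 \<in> carrier_mat 1 (rdim A x0)"
      and cG': "\<not> i < a \<Longrightarrow> G' (i - a) x0 \<in> carrier_mat 1 (rdim B x0)"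
      using rhom_carrier[OF F x0] rhom_carrier[OF F' x0] rhom_carrier[OF G x0] rhom_carrier[OF G' x0] ij T1
      by auto
    show ?thesis
    proof (cases "i < a"; cases "j < a")
      assume "i < a" "j < a"
      thus ?thesis using mat_mult_assoc4[OF cG prl_carrier inl_carrier cF] cG cF GF[OF \<open>i < a\<close> \<open>j < a\<close>]
        by (simp add: K_def H_def prl_inl)
    next
      assume "i < a" "\<not> j < a"
      hence "i \<noteq> j" by simp
      thus ?thesis using \<open>i < a\<close> \<open>\<not> j < a\<close> mat_mult_assoc4[OF cG prl_carrier inr_carrier cF'] cG cF'
        by (simp add: K_def H_def prl_inr)
    next
      assume "\<not> i < a" "j < a"
      hence "i \<noteq> j" by simp
      thus ?thesis using \<open>\<not> i < a\<close> \<open>j < a\<close> mat_mult_assoc4[OF cG' prr_carrier inl_carrier cF] cG' cF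
        by (simp add: K_def H_def prr_inl)
    next
      assume "\<not> i < a" "\<not> j < a"
      moreover have "i - a < b" "j - a < b" "(i - a = j - a) = (i = j)" using calculation ij by auto
      ultimately show ?thesis
        using mat_mult_assoc4[OF cG' prr_carrier inr_carrier cF'] cG' cF' GF'[of "i - a" "j - a"]
        by (simp add: K_def H_def prr_inr)
    qed
  qed
  show ?thesis unfolding splits_def using H K KH by blast
qed

lemma splits_dsum:
  assumes T: "is_rep m n S T" and x0: "x0 \<in> S" and T1: "rdim T x0 = 1" and Sg: "S \<subseteq> grid m n"
    and Ls: "\<forall>L\<in>set Ls. is_rep m n S L"
  shows "splits m n S T x0 (dsum Ls) (length (filter (\<lambda>N. iso_rep m n S N T) Ls))"
  using Ls
proof (induction Ls)
  case Nil
  show ?case by (simp add: splits_zero)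
next
  case (Cons N Ls)
  have N: "is_rep m n S N" and R: "is_rep m n S (dsum Ls)" using Cons.prems is_rep_dsum[OF Sg] by auto
  have "splits m n S T x0 N (if iso_rep m n S N T then 1 else 0)"
    using splits_iso[OF T T N x0 iso_rep_sym[OF N T] splits_self[OF T x0 T1]] splits_zero[of m n S T x0 N]
    by auto
  moreover have "splits m n S T x0 (dsum Ls) (length (filter (\<lambda>N. iso_rep m n S N T) Ls))"
    using Cons by simp
  ultimately have "splits m n S T x0 (bsum N (dsum Ls))
      ((if iso_rep m n S N T then 1 else 0) + length (filter (\<lambda>N. iso_rep m n S N T) Ls))"
    by (rule splits_bsum[OF T N R x0 T1])
  thus ?case
    by (cases "iso_rep m n S N T") (simp_all add: dsum_Cons)
qed

lemma mult_cons_col_row_index: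
  assumes B: "B \<in> carrier_mat d c" and A: "A \<in> carrier_mat c e" and i: "i < d" and j: "j < e"
  shows "(mat d (Suc c) (\<lambda>(i, k). if k = 0 then \<beta> i else B $$ (i, k - 1)) *
          mat (Suc c) e (\<lambda>(k, j). if k = 0 then \<alpha> j else A $$ (k - 1, j))) $$ (i, j)
        = \<beta> i * \<alpha> j + (B * A) $$ (i, j)"
  using assms by (simp add: scalar_prod_def atLeast0LessThan sum.lessThan_Suc_shift del: sum.lessThan_Suc)

lemma composite_through_iso:
  assumes N: "is_rep m n S N" and T: "is_rep m n S T" and iso: "iso_rep m n S N T"
    and x0: "x0 \<in> S" and T1: "rdim T x0 = 1"
  obtains f g where "rhom m n S N T f" "rhom m n S T N g"
    "\<And>F G. rhom m n S T N F \<Longrightarrow> rhom m n S N T G \<Longrightarrow>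
      (G x0 * F x0) $$ (0, 0) = (G x0 * g x0) $$ (0, 0) * (f x0 * F x0) $$ (0, 0)"
proof -
  obtain f g where f: "rhom m n S N T f" and g: "rhom m n S T N g"
    and gf: "\<And>x. x \<in> S \<Longrightarrow> g x * f x = 1\<^sub>m (rdim N x)"
    and "\<And>x. x \<in> S \<Longrightarrow> f x * g x = 1\<^sub>m (rdim T x)"
    using iso_rep_rhomsE[OF N T iso] by blast
  have N1: "rdim N x0 = 1" using iso_rep_rdim[OF iso x0] T1 by simp
  have fac: "(G x0 * F x0) $$ (0, 0) = (G x0 * g x0) $$ (0, 0) * (f x0 * F x0) $$ (0, 0)"
    if F: "rhom m n S T N F" and G: "rhom m n S N T G" for F G
  proof -
    have c: "G x0 \<in> carrier_mat 1 1" "g x0 \<in> carrier_mat 1 1" "f x0 \<in> carrier_mat 1 1" "F x0 \<in> carrier_mat 1 1"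
      using rhom_carrier[OF G x0] rhom_carrier[OF g x0] rhom_carrier[OF f x0] rhom_carrier[OF F x0] T1 N1
      by auto
    have "G x0 * F x0 = (G x0 * g x0) * (f x0 * F x0)"
      using mat_mult_assoc4[OF c] gf[OF x0] N1 c(1) by simp
    thus ?thesis using c by (simp add: scalar_prod_def)
  qed
  show thesis by (rule that[OF f g]) (rule fac)
qed

lemma composite_matrix_factors:
  assumes T: "is_rep m n S T" and x0: "x0 \<in> S" and T1: "rdim T x0 = 1" and Sg: "S \<subseteq> grid m n"
    and Ls: "\<forall>L\<in>set Ls. is_rep m n S L \<and> (iso_rep m n S L T \<or> null_rep m n S T x0 L)"
    and F: "\<And>j. j < d \<Longrightarrow> rhom m n S T (dsum Ls) (F j)"
    and G: "\<And>i. i < d \<Longrightarrow> rhom m n S (dsum Ls) T (G i)"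
  defines "c \<equiv> length (filter (\<lambda>N. iso_rep m n S N T) Ls)"
  obtains B A where "B \<in> carrier_mat d c" "A \<in> carrier_mat c d"
    "\<And>i j. i < d \<Longrightarrow> j < d \<Longrightarrow> (G i x0 * F j x0) $$ (0, 0) = (B * A) $$ (i, j)"
  using Ls F G unfolding c_def
proof (induction Ls arbitrary: F G thesis)
  case Nil
  show ?case
  proof (rule Nil.prems(1)[of "0\<^sub>m d 0" "0\<^sub>m 0 d"])
    fix i j assume ij: "i < d" "j < d"
    have "G i x0 * F j x0 = 0\<^sub>m 1 1"
      using rhom_carrier[OF Nil.prems(4)[OF ij(1)] x0] rhom_carrier[OF Nil.prems(3)[OF ij(2)] x0] T1
      by (intro mult_empty_mat) auto
    thus "(G i x0 * F j x0) $$ (0, 0) = (0\<^sub>m d 0 * 0\<^sub>m 0 d) $$ (i, j)" using ij by simp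
  qed auto
next
  case (Cons N Rs)
  have N: "is_rep m n S N" and Nc: "iso_rep m n S N T \<or> null_rep m n S T x0 N" using Cons.prems(2) by auto
  have R: "is_rep m n S (dsum Rs)" using Cons.prems(2) is_rep_dsum[OF Sg] by auto
  note X = is_rep_bsum[OF N R]
  let ?a = "rdim N" and ?b = "rdim (dsum Rs)" and ?c = "length (filter (\<lambda>N. iso_rep m n S N T) Rs)"
  define FN where "FN = (\<lambda>j x. prl (?a x) (?b x) * F j x)"
  define FR where "FR = (\<lambda>j x. prr (?a x) (?b x) * F j x)"
  define GN where "GN = (\<lambda>i x. G i x * inl (?a x) (?b x))"
  define GR where "GR = (\<lambda>i x. G i x * inr (?a x) (?b x))"
  have hF: "\<And>j. j < d \<Longrightarrow> rhom m n S T (bsum N (dsum Rs)) (F j)" using Cons.prems(3) unfolding dsum_Cons .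
  have hG: "\<And>i. i < d \<Longrightarrow> rhom m n S (bsum N (dsum Rs)) T (G i)" using Cons.prems(4) unfolding dsum_Cons .
  have hFN: "\<And>j. j < d \<Longrightarrow> rhom m n S T N (FN j)"
    unfolding FN_def using rhom_comp[OF T X N hF rhom_prl[OF N R]] .
  have hFR: "\<And>j. j < d \<Longrightarrow> rhom m n S T (dsum Rs) (FR j)"
    unfolding FR_def using rhom_comp[OF T X R hF rhom_prr[OF N R]] .
  have hGN: "\<And>i. i < d \<Longrightarrow> rhom m n S N T (GN i)"
    unfolding GN_def using rhom_comp[OF N X T rhom_inl[OF N R] hG] .
  have hGR: "\<And>i. i < d \<Longrightarrow> rhom m n S (dsum Rs) T (GR i)"
    unfolding GR_def using rhom_comp[OF R X T rhom_inr[OF N R] hG] .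
  obtain B' A' where B': "B' \<in> carrier_mat d ?c" and A': "A' \<in> carrier_mat ?c d"
    and BA': "\<And>i j. i < d \<Longrightarrow> j < d \<Longrightarrow> (GR i x0 * FR j x0) $$ (0, 0) = (B' * A') $$ (i, j)"
    using Cons.IH[where F = FR and G = GR] Cons.prems(2) hFR hGR by auto
  have split: "(G i x0 * F j x0) $$ (0, 0) = (GN i x0 * FN j x0) $$ (0, 0) + (GR i x0 * FR j x0) $$ (0, 0)"
    if ij: "i < d" "j < d" for i j
  proof -
    have cG: "G i x0 \<in> carrier_mat 1 (?a x0 + ?b x0)" and cF: "F j x0 \<in> carrier_mat (?a x0 + ?b x0) 1"
      using rhom_carrier[OF hG[OF ij(1)] x0] rhom_carrier[OF hF[OF ij(2)] x0] T1 by auto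
    show ?thesis
      using mult_through_blocks[OF cG cF] cG cF by (simp add: GN_def FN_def GR_def FR_def)
  qed
  show ?case
  proof (cases "iso_rep m n S N T")
    case True
    obtain f g where f: "rhom m n S N T f" and g: "rhom m n S T N g"
      and fac: "\<And>F G. rhom m n S T N F \<Longrightarrow> rhom m n S N T G \<Longrightarrow>
        (G x0 * F x0) $$ (0, 0) = (G x0 * g x0) $$ (0, 0) * (f x0 * F x0) $$ (0, 0)"
      using composite_through_iso[OF N T True x0 T1] by blast
    \<comment> \<open>so N contributes the rank one matrix with entries \<beta> i * \<alpha> j\<close>
    define \<beta> where "\<beta> = (\<lambda>i. (GN i x0 * g x0) $$ (0, 0))"
    define \<alpha> where "\<alpha> = (\<lambda>j. (f x0 * FN j x0) $$ (0, 0))"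
    show ?thesis
    proof (rule Cons.prems(1)[of "mat d (Suc ?c) (\<lambda>(i, k). if k = 0 then \<beta> i else B' $$ (i, k - 1))"
          "mat (Suc ?c) d (\<lambda>(k, j). if k = 0 then \<alpha> j else A' $$ (k - 1, j))"])
      fix i j assume ij: "i < d" "j < d"
      show "(G i x0 * F j x0) $$ (0, 0) = (mat d (Suc ?c) (\<lambda>(i, k). if k = 0 then \<beta> i else B' $$ (i, k - 1)) *
          mat (Suc ?c) d (\<lambda>(k, j). if k = 0 then \<alpha> j else A' $$ (k - 1, j))) $$ (i, j)"
        using split[OF ij] fac[OF hFN[OF ij(2)] hGN[OF ij(1)]] BA'[OF ij] mult_cons_col_row_index[OF B' A' ij]
        unfolding \<alpha>_def \<beta>_def by simp
    qed (use True in auto)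
  next
    case False
    hence "null_rep m n S T x0 N" using Nc by simp
    hence zero: "(GN i x0 * FN j x0) $$ (0, 0) = 0" if "i < d" "j < d" for i j
      using hFN[OF that(2)] hGN[OF that(1)] unfolding null_rep_def by blast
    show ?thesis
    proof (rule Cons.prems(1)[of B' A'])
      fix i j assume ij: "i < d" "j < d"
      show "(G i x0 * F j x0) $$ (0, 0) = (B' * A') $$ (i, j)" using split[OF ij] BA'[OF ij] zero[OF ij] by simp
    qed (use False B' A' in simp_all)
  qed
qed

lemma splits_le_count:
  assumes T: "is_rep m n S T" and x0: "x0 \<in> S" and T1: "rdim T x0 = 1" and Sg: "S \<subseteq> grid m n"
    and Ls: "\<forall>L\<in>set Ls. is_rep m n S L \<and> (iso_rep m n S L T \<or> null_rep m n S T x0 L)"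
    and sp: "splits m n S T x0 (dsum Ls) d"
  shows "d \<le> length (filter (\<lambda>N. iso_rep m n S N T) Ls)"
proof -
  obtain F G where F: "\<And>j. j < d \<Longrightarrow> rhom m n S T (dsum Ls) (F j)"
    and G: "\<And>i. i < d \<Longrightarrow> rhom m n S (dsum Ls) T (G i)"
    and GF: "\<And>i j. i < d \<Longrightarrow> j < d \<Longrightarrow> (G i x0 * F j x0) $$ (0, 0) = (if i = j then 1 else 0)"
    using sp unfolding splits_def by blast
  let ?c = "length (filter (\<lambda>N. iso_rep m n S N T) Ls)"
  have "\<exists>B A. B \<in> carrier_mat d ?c \<and> A \<in> carrier_mat ?c d \<and>
      (\<forall>i<d. \<forall>j<d. (G i x0 * F j x0) $$ (0, 0) = (B * A) $$ (i, j))"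
    by (rule composite_matrix_factors[OF T x0 T1 Sg Ls F G]) auto
  then obtain B A where B: "B \<in> carrier_mat d ?c" and A: "A \<in> carrier_mat ?c d"
    and BA: "\<forall>i<d. \<forall>j<d. (G i x0 * F j x0) $$ (0, 0) = (B * A) $$ (i, j)" by blast
  have "B * A = 1\<^sub>m d"
  proof (rule eq_matI)
    fix i j assume "i < dim_row (1\<^sub>m d :: 'a mat)" "j < dim_col (1\<^sub>m d :: 'a mat)"
    thus "(B * A) $$ (i, j) = 1\<^sub>m d $$ (i, j)" using BA GF[of i j] by simp
  qed (use A B in auto)
  thus ?thesis by (rule dim_le_of_left_inverse[OF B A])
qed

text \<open>Every indecomposable summand is isomorphic to T or null, so all Krull-Schmidt decompositions
  give the same count and the choice made in the definition of mult does not matter.\<close>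

lemma mult_eq_count:
  fixes X :: "'a::field rep"
  assumes Sg: "S \<subseteq> grid m n" and T: "is_rep m n S (intv_rep I :: 'a rep)"
    and conn: "zigzag_connected m n (S \<inter> I)" and x0: "x0 \<in> S \<inter> I"
    and X: "is_rep m n S X" and iso: "iso_rep m n S X (dsum Ls)"
    and Ls: "\<forall>L\<in>set Ls. is_rep m n S L \<and> (iso_rep m n S L (intv_rep I) \<or> null_rep m n S (intv_rep I) x0 L)"
  shows "mult m n S X (intv_rep I) = length (filter (\<lambda>N. iso_rep m n S N (intv_rep I)) Ls)"
proof -
  let ?T = "intv_rep I :: 'a rep"
  let ?c = "\<lambda>Ls. length (filter (\<lambda>N. iso_rep m n S N ?T) Ls)"
  have x0S: "x0 \<in> S" and T1: "rdim ?T x0 = 1" using x0 by auto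
  have reps: "\<forall>L\<in>set Ls. is_rep m n S L" using Ls by blast
  have dL: "is_rep m n S (dsum Ls)" using is_rep_dsum[OF Sg reps] .
  have same: "?c Ls' = ?c Ls" if KS: "KS_decomp m n S X Ls'" for Ls'
  proof -
    have Ls': "\<forall>L\<in>set Ls'. is_rep m n S L \<and> (iso_rep m n S L ?T \<or> null_rep m n S ?T x0 L)"
      using KS indecomposable_iso_or_null[OF T conn x0] unfolding KS_decomp_def indecomposable_def by blast
    have reps': "\<forall>L\<in>set Ls'. is_rep m n S L" using Ls' by blast
    have dL': "is_rep m n S (dsum Ls')" using is_rep_dsum[OF Sg reps'] .
    have iso': "iso_rep m n S (dsum Ls') (dsum Ls)"
      using iso_rep_trans[OF dL' X dL iso_rep_sym[OF X dL'] iso] KS unfolding KS_decomp_def by blast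
    have "?c Ls' \<le> ?c Ls"
      using splits_iso[OF T dL' dL x0S iso' splits_dsum[OF T x0S T1 Sg reps']]
      by (rule splits_le_count[OF T x0S T1 Sg Ls])
    moreover have "?c Ls \<le> ?c Ls'"
      using splits_iso[OF T dL dL' x0S iso_rep_sym[OF dL' dL iso'] splits_dsum[OF T x0S T1 Sg reps]]
      by (rule splits_le_count[OF T x0S T1 Sg Ls'])
    ultimately show ?thesis by simp
  qed
  obtain Ls0 where "KS_decomp m n S X Ls0" using KS_decomp_exists[OF Sg X] by blast
  hence "\<exists>Ls'. KS_decomp m n S X Ls' \<and> ?c Ls' = ?c Ls" using same by blast
  thus ?thesis unfolding mult_def by (rule someI2_ex) (use same in blast)
qed

section \<open>Essential vertices of an interval\<close>

lemma interval_subset_grid: "is_interval m n J \<Longrightarrow> J \<subseteq> grid m n"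
  unfolding is_interval_def by blast

lemma exists_source_below:
  assumes "I \<subseteq> grid m n" "z \<in> I"
  shows "\<exists>s\<in>I. \<not> (\<exists>a\<in>I. arrow m n a s) \<and> leq m n s z"
  using assms(2)
proof (induction "fst z + snd z" arbitrary: z rule: less_induct)
  case less
  show ?case
  proof (cases "\<exists>a\<in>I. arrow m n a z")
    case True
    then obtain a where a: "a \<in> I" "arrow m n a z" by blast
    hence "fst a + snd a < fst z + snd z" unfolding arrow_def by auto
    then obtain s where "s \<in> I" "\<not> (\<exists>a\<in>I. arrow m n a s)" "leq m n s a" using less.hyps a(1) by blast
    thus ?thesis using leq_trans arrow_imp_leq[OF a(2)] by blast
  qed (use less.prems assms(1) leq_refl in blast)
qed

lemma exists_sink_above:
  assumes "I \<subseteq> grid m n" "z \<in> I"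
  shows "\<exists>t\<in>I. \<not> (\<exists>b\<in>I. arrow m n t b) \<and> leq m n z t"
  using assms(2)
proof (induction "m + n - (fst z + snd z)" arbitrary: z rule: less_induct)
  case less
  show ?case
  proof (cases "\<exists>b\<in>I. arrow m n z b")
    case True
    then obtain b where b: "b \<in> I" "arrow m n z b" by blast
    hence "fst b + snd b \<le> m + n" "fst b + snd b = fst z + snd z + 1"
      unfolding arrow_def grid_def by auto
    hence "m + n - (fst b + snd b) < m + n - (fst z + snd z)" by linarith
    then obtain t where "t \<in> I" "\<not> (\<exists>c\<in>I. arrow m n t c)" "leq m n b t" using less.hyps b(1) by blast
    thus ?thesis using leq_trans arrow_imp_leq[OF b(2)] by blast
  qed (use less.prems assms(1) leq_refl in blast)
qed

lemma ess_subset: "ess m n c I \<subseteq> I"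
  by (cases c) (auto simp: ess_def sources_sinks_def)

lemma sources_sinks_subset_ess: "sources_sinks m n I \<subseteq> ess m n c I"
proof (cases c)
  case CC
  have "x \<in> fst ` sources_sinks m n I \<times> snd ` sources_sinks m n I" if "x \<in> sources_sinks m n I" for x
    using that by (auto simp: mem_Times_iff)
  thus ?thesis using CC by (auto simp: ess_def sources_sinks_def)
qed (auto simp: ess_def sources_sinks_def)

lemma
  assumes "I \<subseteq> grid m n" "z \<in> I"
  shows ess_below: "\<exists>s\<in>ess m n c I. leq m n s z"
    and ess_above: "\<exists>t\<in>ess m n c I. leq m n z t"
  using exists_source_below[OF assms] exists_sink_above[OF assms] sources_sinks_subset_ess[of m n I c]
  unfolding sources_sinks_def by blast+

text \<open>An interval is determined by its essential vertices: they contain its sources and sinks,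
  and every vertex lies between a source and a sink.\<close>

lemma ess_subset_interval_iff:
  assumes J: "is_interval m n J" and I: "is_interval m n I"
  shows "ess m n c I \<subseteq> J \<longleftrightarrow> I \<subseteq> J"
proof
  assume ss: "ess m n c I \<subseteq> J"
  show "I \<subseteq> J"
  proof
    fix z assume z: "z \<in> I"
    obtain s t where "s \<in> J" "t \<in> J" "leq m n s z" "leq m n z t"
      using ess_below[OF interval_subset_grid[OF I] z] ess_above[OF interval_subset_grid[OF I] z] ss
      by blast
    thus "z \<in> J" using J unfolding is_interval_def convex_set_def by blast
  qed
qed (use ess_subset in blast)

lemma ess_nonempty: "is_interval m n I \<Longrightarrow> \<exists>x. x \<in> ess m n c I"
  using ess_below[OF interval_subset_grid] unfolding is_interval_def by blast

lemma zigzag_connected_ess: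
  assumes I: "is_interval m n I"
  shows "zigzag_connected m n (ess m n c I)"
proof -
  let ?E = "ess m n c I"
  let ?R = "\<lambda>a b. a \<in> ?E \<and> b \<in> ?E \<and> (leq m n a b \<or> leq m n b a)"
  have Ig: "I \<subseteq> grid m n" using interval_subset_grid[OF I] .
  define s where "s = (\<lambda>z. SOME s. s \<in> ?E \<and> leq m n s z)"
  define t where "t = (\<lambda>z. SOME t. t \<in> ?E \<and> leq m n z t)"
  have s: "s z \<in> ?E \<and> leq m n (s z) z" if "z \<in> I" for z
    unfolding s_def by (rule someI_ex) (use ess_below[OF Ig that] in blast)
  have t: "t z \<in> ?E \<and> leq m n z (t z)" if "z \<in> I" for z
    unfolding t_def by (rule someI_ex) (use ess_above[OF Ig that] in blast)
  \<comment> \<open>the sources chosen below two comparable vertices lie below a common sink\<close>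
  have comparable: "?R\<^sup>*\<^sup>* (s u) (s v)" if uv: "u \<in> I" "v \<in> I" "leq m n u v \<or> leq m n v u" for u v
  proof -
    have "\<exists>w\<in>I. leq m n u w \<and> leq m n v w"
      using uv leq_refl[of u m n] leq_refl[of v m n] Ig by blast
    then obtain w where w: "w \<in> I" "leq m n u w" "leq m n v w" by blast
    have "?R (s u) (t w)" "?R (t w) (s v)"
      using s[OF uv(1)] s[OF uv(2)] t[OF w(1)] leq_trans w(2,3) by blast+
    hence "?R\<^sup>*\<^sup>* (s u) (t w)" "?R (t w) (s v)" by auto
    thus ?thesis by (rule rtranclp.rtrancl_into_rtrancl)
  qed
  have path: "?R\<^sup>*\<^sup>* (s x) (s y)"
    if "(\<lambda>a b. a \<in> I \<and> b \<in> I \<and> (arrow m n a b \<or> arrow m n b a))\<^sup>*\<^sup>* x y" for x y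
    using that
  proof (induction rule: rtranclp_induct)
    case (step b c)
    hence "?R\<^sup>*\<^sup>* (s b) (s c)" using comparable[of b c] arrow_imp_leq by blast
    thus ?case using step.IH by (rule rtranclp_trans[rotated])
  qed simp
  show ?thesis unfolding zigzag_connected_def
  proof (intro ballI)
    fix x y assume x: "x \<in> ?E" and y: "y \<in> ?E"
    hence xI: "x \<in> I" and yI: "y \<in> I" using ess_subset by blast+
    have "?R x (s x)" "?R (s y) y" using x y s[OF xI] s[OF yI] by blast+
    moreover have "?R\<^sup>*\<^sup>* (s x) (s y)"
      using path I xI yI unfolding is_interval_def connected_set_def by blast
    ultimately have "?R\<^sup>*\<^sup>* x (s y)" "?R (s y) y" by (auto intro: converse_rtranclp_into_rtranclp)
    thus "?R\<^sup>*\<^sup>* x y" by (rule rtranclp.rtrancl_into_rtrancl)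
  qed
qed

lemma zigzag_connected_interval:
  assumes J: "is_interval m n J" shows "zigzag_connected m n J"
  unfolding zigzag_connected_def
proof (intro ballI)
  fix x y assume "x \<in> J" "y \<in> J"
  hence "(\<lambda>a b. a \<in> J \<and> b \<in> J \<and> (arrow m n a b \<or> arrow m n b a))\<^sup>*\<^sup>* x y"
    using J unfolding is_interval_def connected_set_def by blast
  thus "(\<lambda>a b. a \<in> J \<and> b \<in> J \<and> (leq m n a b \<or> leq m n b a))\<^sup>*\<^sup>* x y"
    by (rule rtranclp_mono[THEN predicate2D, rotated]) (auto intro: arrow_imp_leq)
qed

lemma interval_boundary_arrow:
  assumes J': "is_interval m n J'" and sub: "J \<subseteq> J'" and ne: "J \<noteq> {}" and neq: "J \<noteq> J'"
  shows "\<exists>y z. y \<in> J \<and> z \<in> J' \<and> z \<notin> J \<and> (arrow m n y z \<or> arrow m n z y)"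
proof -
  obtain x w where x: "x \<in> J" and w: "w \<in> J'" "w \<notin> J" using ne sub neq by blast
  have "(\<lambda>a b. a \<in> J' \<and> b \<in> J' \<and> (arrow m n a b \<or> arrow m n b a))\<^sup>*\<^sup>* x w"
    using J' x w sub unfolding is_interval_def connected_set_def by blast
  thus ?thesis using w(2)
  proof (induction rule: rtranclp_induct)
    case (step b c)
    thus ?case by (cases "b \<in> J") blast+
  qed (use x in simp)
qed

section \<open>Interval-decomposable representations\<close>

lemma iso_rep_intv_rep_iff:
  assumes D: "is_rep m n S (intv_rep D :: 'a::field rep)"
  shows "iso_rep m n S (intv_rep D :: 'a rep) (intv_rep C) \<longleftrightarrow> D \<inter> S = C \<inter> S"
proof
  assume iso: "iso_rep m n S (intv_rep D :: 'a rep) (intv_rep C)"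
  have "x \<in> D \<longleftrightarrow> x \<in> C" if "x \<in> S" for x
    using iso_rep_rdim[OF iso that] by (simp split: if_splits)
  thus "D \<inter> S = C \<inter> S" by blast
next
  assume DC: "D \<inter> S = C \<inter> S"
  show "iso_rep m n S (intv_rep D :: 'a rep) (intv_rep C)"
    by (rule iso_rep_eqI[OF D]) (use DC in \<open>auto simp: intv_rep_def\<close>)
qed

lemma null_rep_intv_rep:
  fixes C D :: "vtx set"
  assumes D: "is_rep m n S (intv_rep D :: 'a::field rep)"
    and conn: "zigzag_connected m n (S \<inter> C)" and x0: "x0 \<in> S \<inter> C"
    and sep: "\<exists>y\<in>S \<inter> C. y \<notin> D \<or> (\<exists>z\<in>S \<inter> D. z \<notin> C \<and> (leq m n z y \<or> leq m n y z))"
  shows "null_rep m n S (intv_rep C :: 'a rep) x0 (intv_rep D)"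
  unfolding null_rep_def
proof (intro allI impI)
  let ?T = "intv_rep C :: 'a rep" and ?X = "intv_rep D :: 'a rep"
  fix F G assume F: "rhom m n S ?T ?X F" and G: "rhom m n S ?X ?T G"
  obtain y where y: "y \<in> S \<inter> C" and wit: "y \<notin> D \<or> (\<exists>z\<in>S \<inter> D. z \<notin> C \<and> (leq m n z y \<or> leq m n y z))"
    using sep by blast
  have "G y * F y = 0\<^sub>m 1 1"
  proof (cases "y \<in> D")
    case False
    thus ?thesis using rhom_carrier[OF F, of y] rhom_carrier[OF G, of y] y by (intro mult_empty_mat) auto
  next
    case yD: True
    then obtain z where z: "z \<in> S \<inter> D" "z \<notin> C" and "leq m n z y \<or> leq m n y z" using wit by blast
    have Fy: "F y \<in> carrier_mat (rdim ?X y) 1" and Gy: "G y \<in> carrier_mat 1 (rdim ?X y)"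
      using rhom_carrier[OF F, of y] rhom_carrier[OF G, of y] y by auto
    \<comment> \<open>a morphism into or out of the thin T vanishes next to a vertex outside C\<close>
    show ?thesis
    proof (cases "leq m n z y")
      case True
      have "G y = G y * rmap ?X z y" using Gy yD z by (simp add: rmap_intv_rep_in)
      also have "\<dots> = rmap ?T z y * G z" using rhom_commute[OF G, of z y] True y z by auto
      also have "\<dots> = 0\<^sub>m 1 1"
        using rhom_carrier[OF G, of z] rmap_intv_rep_carrier[of C z y] y z by (intro mult_empty_mat) auto
      finally show ?thesis using Fy yD by simp
    next
      case False
      hence "leq m n y z" using \<open>leq m n z y \<or> leq m n y z\<close> by blast
      have "F y = rmap ?X y z * F y" using Fy yD z by (simp add: rmap_intv_rep_in)
      also have "\<dots> = F z * rmap ?T y z" using rhom_commute[OF F, of y z] \<open>leq m n y z\<close> y z by auto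
      also have "\<dots> = 0\<^sub>m 1 1"
        using rhom_carrier[OF F, of z] rmap_intv_rep_carrier[of C y z] y z by (intro mult_empty_mat) auto
      finally show ?thesis using Gy yD by simp
    qed
  qed
  thus "(G x0 * F x0) $$ (0, 0) = 0"
    using intv_rep_composite_const[OF D F G conn y x0] by simp
qed

lemma mult_dsum_intv_rep:
  fixes M :: "'a::field rep"
  assumes Sg: "S \<subseteq> grid m n" and C: "is_rep m n S (intv_rep C :: 'a rep)"
    and conn: "zigzag_connected m n (S \<inter> C)" and x0: "x0 \<in> S \<inter> C"
    and M: "is_rep m n S M" and Js: "\<forall>J\<in>set Js. is_rep m n S (intv_rep J :: 'a rep)"
    and iso: "iso_rep m n S M (dsum (map intv_rep Js))"
    and sep: "\<forall>J\<in>set Js. J \<inter> S = C \<inter> S \<or>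
      (\<exists>y\<in>S \<inter> C. y \<notin> J \<or> (\<exists>z\<in>S \<inter> J. z \<notin> C \<and> (leq m n z y \<or> leq m n y z)))"
  shows "mult m n S M (intv_rep C) = length (filter (\<lambda>J. J \<inter> S = C \<inter> S) Js)"
proof -
  have Ls: "\<forall>L\<in>set (map intv_rep Js). is_rep m n S L \<and>
      (iso_rep m n S L (intv_rep C :: 'a rep) \<or> null_rep m n S (intv_rep C) x0 L)"
  proof
    fix L :: "'a rep" assume "L \<in> set (map intv_rep Js)"
    then obtain J where J: "J \<in> set Js" and L: "L = intv_rep J" by auto
    have XJ: "is_rep m n S (intv_rep J :: 'a rep)" using Js J by blast
    show "is_rep m n S L \<and> (iso_rep m n S L (intv_rep C) \<or> null_rep m n S (intv_rep C) x0 L)"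
    proof (cases "J \<inter> S = C \<inter> S")
      case False
      hence "null_rep m n S (intv_rep C :: 'a rep) x0 (intv_rep J)"
        using null_rep_intv_rep[OF XJ conn x0] sep J by blast
      thus ?thesis using XJ L by simp
    qed (use XJ L iso_rep_intv_rep_iff[OF XJ] in simp)
  qed
  have "mult m n S M (intv_rep C) =
      length (filter (\<lambda>L. iso_rep m n S L (intv_rep C)) (map (intv_rep :: vtx set \<Rightarrow> 'a rep) Js))"
    using mult_eq_count[OF Sg C conn x0 M iso Ls] .
  also have "\<dots> = length (filter (\<lambda>J. J \<inter> S = C \<inter> S) Js)"
    unfolding filter_map length_map o_def
    by (intro arg_cong[where f = length] filter_cong refl iso_rep_intv_rep_iff) (use Js in blast)
  finally show ?thesis .
qed

lemma mult_grid_intv_rep: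
  fixes M :: "'a::field rep"
  assumes M: "is_rep m n (grid m n) M" and Js: "\<forall>J\<in>set Js. is_interval m n J"
    and iso: "iso_rep m n (grid m n) M (dsum (map intv_rep Js))" and J0: "is_interval m n J0"
  shows "mult m n (grid m n) M (intv_rep J0) = count_list Js J0"
proof -
  let ?G = "grid m n"
  have J0g: "J0 \<subseteq> ?G" and "J0 \<noteq> {}" using J0 unfolding is_interval_def by auto
  then obtain x0 where x0: "x0 \<in> ?G \<inter> J0" by blast
  have Jg: "J \<subseteq> ?G" if "J \<in> set Js" for J using interval_subset_grid Js that by blast
  have eq: "J \<inter> ?G = J0 \<inter> ?G \<longleftrightarrow> J = J0" if "J \<in> set Js" for J
    using Jg[OF that] J0g by blast
  have conn: "zigzag_connected m n (?G \<inter> J0)"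
    using zigzag_connected_interval[OF J0] J0g by (simp add: Int_absorb1)
  have reps: "\<forall>J\<in>set Js. is_rep m n ?G (intv_rep J :: 'a rep)"
    using Js is_rep_intv_rep_interval[OF subset_refl] by blast
  have sep: "\<forall>J\<in>set Js. J \<inter> ?G = J0 \<inter> ?G \<or>
      (\<exists>y\<in>?G \<inter> J0. y \<notin> J \<or> (\<exists>z\<in>?G \<inter> J. z \<notin> J0 \<and> (leq m n z y \<or> leq m n y z)))"
  proof
    fix J assume J: "J \<in> set Js"
    show "J \<inter> ?G = J0 \<inter> ?G \<or>
      (\<exists>y\<in>?G \<inter> J0. y \<notin> J \<or> (\<exists>z\<in>?G \<inter> J. z \<notin> J0 \<and> (leq m n z y \<or> leq m n y z)))"
    proof (cases "J0 \<subseteq> J \<and> J \<noteq> J0")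
      case True
      then obtain y z where "y \<in> J0" "z \<in> J" "z \<notin> J0" "arrow m n y z \<or> arrow m n z y"
        using interval_boundary_arrow[of m n J J0] Js J \<open>J0 \<noteq> {}\<close> by blast
      thus ?thesis using J0g Jg[OF J] arrow_imp_leq by blast
    qed (use eq[OF J] J0g in blast)
  qed
  have "mult m n ?G M (intv_rep J0) = length (filter (\<lambda>J. J \<inter> ?G = J0 \<inter> ?G) Js)"
    by (rule mult_dsum_intv_rep[OF subset_refl is_rep_intv_rep_interval[OF subset_refl J0] conn x0 M reps iso sep])
  also have "\<dots> = count_list Js J0"
    unfolding count_list_eq_length_filter using eq by (intro arg_cong[where f = length] filter_cong) auto
  finally show ?thesis .
qed

lemma sum_count_list: "finite U \<Longrightarrow> (\<Sum>x\<in>U. count_list xs x) = length (filter (\<lambda>x. x \<in> U) xs)"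
proof -
  assume U: "finite U"
  have "count_list xs x = count_list (filter (\<lambda>x. x \<in> U) xs) x" if "x \<in> U" for x
    using that by (induction xs) auto
  hence "(\<Sum>x\<in>U. count_list xs x) = (\<Sum>x\<in>U. count_list (filter (\<lambda>x. x \<in> U) xs) x)" by simp
  also have "\<dots> = length (filter (\<lambda>x. x \<in> U) xs)" by (rule sum_count_set) (use U in auto)
  finally show ?thesis .
qed

theorem mainTheorem10:
  fixes M :: "'a::field rep" and m n :: nat and I :: "vtx set" and c :: compression
  assumes "m \<ge> 1" and "n \<ge> 1"
    and "is_rep m n (grid m n) M"
    and "interval_decomposable m n M"
    and "is_interval m n I"
  shows "compressed_mult m n c M I =
           (\<Sum>J\<in>{J. is_interval m n J \<and> I \<subseteq> J}. mult m n (grid m n) M (intv_rep J))"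
proof -
  let ?G = "grid m n" and ?S = "ess m n c I" and ?U = "{J. is_interval m n J \<and> I \<subseteq> J}"
  have M: "is_rep m n ?G M" and I: "is_interval m n I" using assms by auto
  obtain Js where Js: "\<forall>J\<in>set Js. is_interval m n J" and iso: "iso_rep m n ?G M (dsum (map intv_rep Js))"
    using assms(4) unfolding interval_decomposable_def by blast
  have SI: "?S \<subseteq> I" and Sg: "?S \<subseteq> ?G" using ess_subset interval_subset_grid[OF I] by blast+
  obtain x0 where x0: "x0 \<in> ?S" using ess_nonempty[OF I] by blast
  have ess_iff: "J \<inter> ?S = I \<inter> ?S \<longleftrightarrow> I \<subseteq> J" if "J \<in> set Js" for J
    using ess_subset_interval_iff[of m n J I c] Js that I SI by blast
  have "compressed_mult m n c M I = length (filter (\<lambda>J. J \<inter> ?S = I \<inter> ?S) Js)"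
    unfolding compressed_mult_def
    by (rule mult_dsum_intv_rep[OF Sg is_rep_intv_rep_interval[OF Sg I] _ _ is_rep_subset[OF M Sg]
          _ iso_rep_subset[OF iso Sg]])
      (use zigzag_connected_ess[OF I] SI x0 Js is_rep_intv_rep_interval[OF Sg] in \<open>auto simp: Int_absorb2\<close>)
  also have "\<dots> = length (filter (\<lambda>J. J \<in> ?U) Js)"
    using ess_iff Js by (intro arg_cong[where f = length] filter_cong) auto
  also have "\<dots> = (\<Sum>J\<in>?U. count_list Js J)"
    by (rule sum_count_list[symmetric], rule finite_subset[of _ "Pow ?G"])
      (use interval_subset_grid finite_grid in auto)
  also have "\<dots> = (\<Sum>J\<in>?U. mult m n ?G M (intv_rep J))"
    using mult_grid_intv_rep[OF M Js iso] by simp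
  finally show ?thesis .
qed

end
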